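(* Let $q\in\mathbb{C}$ with $0<|q|<1$, and let $a,b,c,d,e$ be complex numbers such that at least one of $a$, $b$, $c$ is of the form $q^n$ with $n\in\{1,2,\ldots\}$ (and such that all terms below are well defined). Then \[ \sum_{k=-\infty}^\infty \frac{(q/a,q/b,q/c,q/d,q/e)_k}{(a,bq,cq,dq,eq)_k}(abcde)^k =\frac{a\,(q,ab,bc,ac)_\infty}{q\,(a,bq,cq,abc/q)_\infty} \sum_{k=0}^\infty\frac{(q/a,q/b,q/c,de)_k}{(q,q^2/abc,dq,eq)_k}q^k. \]
   Context: For an integer $n$, the $q$-shifted factorial is $(a)_n=(a;q)_n$ with $(a)_0=1$, $(a)_n=(1-a)(1-aq)\cdots(1-aq^{n-1})$ for $n\ge1$, and $(a)_n=[(1-aq^{-1})(1-aq^{-2})\cdots(1-aq^{n})]^{-1}$ for $n\le -1$. Also $(a_1,\ldots,a_m)_n=(a_1)_n\cdots(a_m)_n$ and $(a_1,\ldots,a_m)_\infty=\lim_{n\to\infty}(a_1,\ldots,a_m)_n$. *)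

theory Defs
  imports "HOL-Analysis.Analysis"
begin

definition qpoch :: "complex \<Rightarrow> complex \<Rightarrow> int \<Rightarrow> complex" where
  "qpoch a q n =
     (if n \<ge> 0 then (\<Prod>j<nat n. (1 - a * q ^ j))
      else inverse (\<Prod>j\<in>{1..nat (- n)}. (1 - a / q ^ j)))"

definition qpoch_inf :: "complex \<Rightarrow> complex \<Rightarrow> complex" where
  "qpoch_inf a q = lim (\<lambda>n. qpoch a q (int n))"

end

theory Submission
  imports Defs
begin

text \<open>
  Say \<open>c = q\<^sup>N\<^sup>+\<^sup>1\<close>; the cases of \<open>a\<close> and \<open>b\<close> are symmetric. Then \<open>(q/c)\<^sub>k = 0\<close> for \<open>k > N\<close>,
  and for \<open>k < -N-1\<close> the factor \<open>(cq)\<^sub>k\<close> of the denominator is infinite, so the bilateral series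
  is a finite sum. Pairing the terms \<open>k = n\<close> and \<open>k = -n-1\<close> by the reflection formula for
  \<open>(x)\<^sub>-\<^sub>n\<close> turns it into a terminating very-well-poised \<open>\<^sub>8\<phi>\<^sub>7\<close> series with parameter \<open>q\<close>. Watson's transformation rewrites that
  series as the balanced \<open>\<^sub>4\<phi>\<^sub>3\<close> on the right, and since \<open>c = q\<^sup>N\<^sup>+\<^sup>1\<close> the quotient of infinite
  products collapses to \<open>(q)\<^sub>N\<^sub>+\<^sub>1 (ab)\<^sub>N / ((aq)\<^sub>N (bq)\<^sub>N)\<close>.

  Watson's transformation is proved classically: a factor of each term of the \<open>\<^sub>8\<phi>\<^sub>7\<close> is expanded
  by the q-Pfaff-Saalschuetz sum, the summations are interchanged, and the inner sum is a
  terminating very-well-poised \<open>\<^sub>6\<phi>\<^sub>5\<close>. Both summation formulas are proved by induction on the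
  number of terms, from a first-order recurrence certified by creative telescoping.
\<close>

section \<open>Finite q-shifted factorials\<close>

definition qpoch_nat :: "complex \<Rightarrow> complex \<Rightarrow> nat \<Rightarrow> complex" where
  "qpoch_nat x q n = (\<Prod>i<n. 1 - x*q^i)"

lemma qpoch_of_nat: "qpoch x q (int n) = qpoch_nat x q n"
  by (simp add: qpoch_def qpoch_nat_def)

lemma qpoch_nat_0 [simp]: "qpoch_nat x q 0 = 1"
  by (simp add: qpoch_nat_def)

lemma qpoch_nat_Suc: "qpoch_nat x q (Suc n) = qpoch_nat x q n * (1 - x*q^n)"
  by (simp add: qpoch_nat_def)

lemma qpoch_nat_Suc_shift: "qpoch_nat x q (Suc n) = (1 - x) * qpoch_nat (x*q) q n"
  by (induction n) (auto simp: qpoch_nat_Suc mult_ac power_Suc)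

lemma qpoch_nat_add: "qpoch_nat x q (m+n) = qpoch_nat x q m * qpoch_nat (x*q^m) q n"
  by (induction n) (auto simp: qpoch_nat_Suc mult_ac power_add)

lemma qpoch_nat_nonzero_le: "j \<le> n \<Longrightarrow> qpoch_nat x q n \<noteq> 0 \<Longrightarrow> qpoch_nat x q j \<noteq> 0"
  using qpoch_nat_add[of x q j "n-j"] by auto

lemma qpoch_nat_inverse_power_eq_0: "q \<noteq> 0 \<Longrightarrow> k < n \<Longrightarrow> qpoch_nat (1/q^k) q n = 0"
  unfolding qpoch_nat_def by (rule prod_zero) (auto intro!: bexI[of _ k])

lemma qpoch_nat_div_power_eq_0: "q \<noteq> 0 \<Longrightarrow> x = q^Suc k \<Longrightarrow> k < n \<Longrightarrow> qpoch_nat (q/x) q n = 0"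
  using qpoch_nat_inverse_power_eq_0[of q k n] by (simp add: field_simps)

lemma qpoch_nat_shift_nonzero: "(\<And>i. x*q^Suc i \<noteq> 1) \<Longrightarrow> qpoch_nat (x*q^Suc k) q m \<noteq> 0"
  unfolding qpoch_nat_def by (auto simp: power_add[symmetric] mult.assoc)

lemma qpoch_nat_power_nonzero: "(\<And>i. q^Suc i \<noteq> 1) \<Longrightarrow> qpoch_nat (q^Suc k) q m \<noteq> 0"
  using qpoch_nat_shift_nonzero[of 1 q k m] by simp

definition qpow_triangular :: "complex \<Rightarrow> nat \<Rightarrow> complex" where
  "qpow_triangular q j = (\<Prod>t<j. q^Suc t)"

lemma qpow_triangular_Suc: "qpow_triangular q (Suc j) = qpow_triangular q j * q^Suc j"
  by (simp add: qpow_triangular_def)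

lemma qpow_triangular_nonzero: "q \<noteq> 0 \<Longrightarrow> qpow_triangular q j \<noteq> 0"
  by (simp add: qpow_triangular_def)

lemma qpoch_nat_inverse_power:
  "q \<noteq> 0 \<Longrightarrow>
   qpoch_nat (1/q^(j+m)) q j = (-1)^j / (q^(j*m) * qpow_triangular q j) * qpoch_nat (q^(m+1)) q j"
proof (induction j)
  case 0 then show ?case by (simp add: qpow_triangular_def)
next
  case (Suc j)
  have a: "qpoch_nat (1/q^(Suc j+m)) q (Suc j) = (1 - 1/q^(Suc j + m)) * qpoch_nat (1/q^(j+m)) q j"
    unfolding qpoch_nat_Suc_shift using Suc.prems by (simp add: field_simps)
  have b: "qpoch_nat (q^(m+1)) q (Suc j) = qpoch_nat (q^(m+1)) q j * (1 - q^(m+1+j))"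
    unfolding qpoch_nat_Suc by (simp add: power_add)
  show ?case
    unfolding a b Suc.IH[OF Suc.prems] qpow_triangular_Suc
    using Suc.prems qpow_triangular_nonzero[OF Suc.prems, of j]
    by (simp add: field_simps power_add power_mult_distrib algebra_simps)
qed

lemma qpoch_nat_reflect:
  assumes "q \<noteq> 0" "y \<noteq> 0"
  shows "qpoch_nat (y*q) q M * (y*q^(j+M+1))^j * (-1)^j * qpoch_nat (1/(y*q^(j+M))) q j
       = qpoch_nat (y*q) q (j+M) * qpow_triangular q j"
proof (induction j)
  case 0 then show ?case by (simp add: qpow_triangular_def)
next
  case (Suc j)
  have a: "qpoch_nat (1/(y*q^(Suc j+M))) q (Suc j)
         = (1 - 1/(y*q^(Suc j+M))) * qpoch_nat (1/(y*q^(j+M))) q j"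
    unfolding qpoch_nat_Suc_shift using assms by (simp add: field_simps)
  have b: "(y*q^(Suc j+M+1))^(Suc j) = (y*q^(j+M+1))^j * q^j * (y*q^(j+M+2))"
    by (simp add: power_mult_distrib power_add field_simps)
  have "qpoch_nat (y*q) q M * (y*q^(Suc j+M+1))^(Suc j) * (-1)^(Suc j)
          * qpoch_nat (1/(y*q^(Suc j+M))) q (Suc j)
     = (qpoch_nat (y*q) q M * (y*q^(j+M+1))^j * (-1)^j * qpoch_nat (1/(y*q^(j+M))) q j)
          * (q^j * (- (y*q^(j+M+2)) * (1 - 1/(y*q^(Suc j+M)))))"
    unfolding a b by (simp add: algebra_simps)
  also have "\<dots> = qpoch_nat (y*q) q (j+M) * qpow_triangular q j
                   * (q^j * (- (y*q^(j+M+2)) * (1 - 1/(y*q^(Suc j+M)))))"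
    using Suc by simp
  also have "\<dots> = qpoch_nat (y*q) q (Suc j+M) * qpow_triangular q (Suc j)"
    unfolding qpow_triangular_Suc using assms by (simp add: qpoch_nat_Suc field_simps power_add)
  finally show ?case .
qed

lemma sum_atMost_telescoping_recurrence:
  fixes T T' H :: "nat \<Rightarrow> 'a::comm_ring"
  assumes rec: "\<And>j. j \<le> Suc k \<Longrightarrow> T' j = \<rho> * T j + (H (Suc j) - H j)"
    and "H 0 = 0" "H (Suc (Suc k)) = 0" "T (Suc k) = 0"
  shows "(\<Sum>j\<le>Suc k. T' j) = \<rho> * (\<Sum>j\<le>k. T j)"
proof -
  have "(\<Sum>j\<le>Suc k. T' j) = (\<Sum>j\<le>Suc k. \<rho> * T j + (H (Suc j) - H j))"
    by (rule sum.cong) (auto simp: rec)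
  also have "\<dots> = \<rho> * (\<Sum>j\<le>Suc k. T j)"
    using sum_lessThan_telescope[of H "Suc (Suc k)"] assms(2,3)
    by (simp add: sum.distrib sum_distrib_left lessThan_Suc_atMost[symmetric] del: sum.lessThan_Suc)
  finally show ?thesis using assms(4) by simp
qed

lemma sum_atMost_shift_vanishing:
  fixes g :: "nat \<Rightarrow> 'a::comm_monoid_add"
  assumes "\<And>k. k < j \<Longrightarrow> g k = 0"
  shows "(\<Sum>k\<le>j+M. g k) = (\<Sum>m\<le>M. g (j+m))"
proof -
  have "(\<Sum>k\<le>j+M. g k) = (\<Sum>k\<in>{j..j+M}. g k)"
    by (rule sum.mono_neutral_right) (auto simp: assms)
  also have "\<dots> = (\<Sum>m\<in>{0..M}. g (m+j))"
    using sum.shift_bounds_cl_nat_ivl[of g 0 j M] by (simp add: add.commute)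
  finally show ?thesis by (simp add: atLeast0AtMost add.commute)
qed

section \<open>Negative indices\<close>

lemma prod_atLeastAtMost_one_minus_div_power:
  assumes "x \<noteq> 0" "q \<noteq> 0"
  shows "(\<Prod>j\<in>{1..m}. 1 - x/q^j) = (-x)^m / qpow_triangular q m * qpoch_nat (q/x) q m"
proof (induction m)
  case 0 then show ?case by (simp add: qpow_triangular_def)
next
  case (Suc m)
  have "(\<Prod>j\<in>{1..Suc m}. 1 - x/q^j) = (\<Prod>j\<in>{1..m}. 1 - x/q^j) * (1 - x/q^Suc m)"
    by (simp add: prod.cl_ivl_Suc)
  also have "\<dots> = (-x)^Suc m / qpow_triangular q (Suc m) * qpoch_nat (q/x) q (Suc m)"
    unfolding Suc.IH qpow_triangular_Suc qpoch_nat_Suc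
    using assms qpow_triangular_nonzero[OF assms(2), of m] by (simp add: field_simps)
  finally show ?case .
qed

lemma qpoch_neg:
  assumes "x \<noteq> 0" "q \<noteq> 0"
  shows "qpoch x q (- int m) = qpow_triangular q m / ((-x)^m * qpoch_nat (q/x) q m)"
proof (cases m)
  case 0
  then show ?thesis by (simp add: qpoch_def qpow_triangular_def)
next
  case (Suc n)
  have neg: "(- int m \<ge> 0) = False" "nat (- (- int m)) = m" using Suc by simp_all
  have "qpoch x q (- int m) = inverse (\<Prod>j\<in>{1..m}. 1 - x/q^j)"
    unfolding qpoch_def neg if_False ..
  then show ?thesis
    unfolding prod_atLeastAtMost_one_minus_div_power[OF assms] by (simp add: divide_inverse mult_ac)
qed

lemma qpoch_nat_nonzero_of_qpoch_neg:
  assumes "q \<noteq> 0" "x \<noteq> 0" "\<And>k::int. k < 0 \<Longrightarrow> qpoch (q/x) q k \<noteq> 0"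
  shows "qpoch_nat x q n \<noteq> 0"
proof
  assume "qpoch_nat x q n = 0"
  moreover have "q/(q/x) = x" using assms(1,2) by simp
  ultimately have "qpoch (q/x) q (- int n) = 0"
    using qpoch_neg[of "q/x" q n] assms(1,2) by simp
  moreover have "n > 0" using \<open>qpoch_nat x q n = 0\<close> by (cases n) simp_all
  ultimately show False using assms(3)[of "- int n"] by simp
qed

lemma qpoch_neg_ratio:
  assumes "x \<noteq> 0" "q \<noteq> 0"
  shows "qpoch (q/x) q (- int m) / qpoch (x*q) q (- int m) = x^(2*m) * qpoch_nat (1/x) q m / qpoch_nat x q m"
proof -
  define T where "T = qpow_triangular q m"
  have T: "T \<noteq> 0" unfolding T_def using qpow_triangular_nonzero[OF assms(2)] .
  have "qpoch (q/x) q (- int m) = T / ((-(q/x))^m * qpoch_nat x q m)"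
    using qpoch_neg[of "q/x" q m] assms by (simp add: T_def)
  moreover have "qpoch (x*q) q (- int m) = T / ((-(x*q))^m * qpoch_nat (1/x) q m)"
    using qpoch_neg[of "x*q" q m] assms by (simp add: T_def)
  moreover have "(-(x*q))^m = x^(2*m) * (-(q/x))^m"
  proof -
    have "x^2 * (-(q/x)) = -(x*q)" using assms by (simp add: power2_eq_square)
    then show ?thesis by (metis power_mult power_mult_distrib)
  qed
  moreover have "(-(q/x))^m \<noteq> (0::complex)" using assms by simp
  ultimately show ?thesis using T assms by (simp add: field_simps)
qed
lemma qpoch_neg_ratio_Suc:
  assumes "x \<noteq> 0" "q \<noteq> 0" "qpoch_nat x q (Suc n) \<noteq> 0"
  shows "qpoch (q/x) q (- int (Suc n)) / qpoch (x*q) q (- int (Suc n))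
       = -(x^(2*n+1)) * qpoch_nat (q/x) q n / qpoch_nat (x*q) q n"
proof -
  have "1 - x \<noteq> 0" "qpoch_nat (x*q) q n \<noteq> 0"
    using assms(3) unfolding qpoch_nat_Suc_shift by auto
  then show ?thesis
    unfolding qpoch_neg_ratio[OF assms(1,2)] qpoch_nat_Suc_shift
    using assms(1) by (simp add: field_simps power2_eq_square)
qed

lemma qpoch_neg_ratio_base:
  assumes "a \<noteq> 0" "q \<noteq> 0"
  shows "qpoch (q/a) q (- int m) / qpoch a q (- int m) = (a^2/q)^m * qpoch_nat (q/a) q m / qpoch_nat a q m"
proof -
  define T where "T = qpow_triangular q m"
  have T: "T \<noteq> 0" unfolding T_def using qpow_triangular_nonzero[OF assms(2)] .
  have "qpoch (q/a) q (- int m) = T / ((-(q/a))^m * qpoch_nat a q m)"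
    using qpoch_neg[of "q/a" q m] assms by (simp add: T_def)
  moreover have "qpoch a q (- int m) = T / ((-a)^m * qpoch_nat (q/a) q m)"
    using qpoch_neg[of a q m] assms by (simp add: T_def)
  moreover have "(-a)^m = (a^2/q)^m * (-(q/a))^m"
  proof -
    have "a^2/q * (-(q/a)) = -a" using assms by (simp add: power2_eq_square)
    then show ?thesis by (metis power_mult_distrib)
  qed
  moreover have "(-(q/a))^m \<noteq> (0::complex)" using assms by simp
  ultimately show ?thesis using T assms by (simp add: field_simps)
qed

section \<open>The q-Pfaff--Saalschuetz summation\<close>

definition saalschutz_term :: "complex \<Rightarrow> complex \<Rightarrow> complex \<Rightarrow> complex \<Rightarrow> nat \<Rightarrow> nat \<Rightarrow> complex" where
  "saalschutz_term q l b c k j =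
     qpoch_nat (1/q^k) q j * qpoch_nat (l*q^k) q j * qpoch_nat (l*q/(b*c)) q j
     / (qpoch_nat q q j * qpoch_nat (l*q/b) q j * qpoch_nat (l*q/c) q j) * q^j"

text \<open>Creative-telescoping certificate for the recurrence in \<open>k\<close> of \<open>saalschutz_term\<close>.\<close>

definition saalschutz_cert :: "complex \<Rightarrow> complex \<Rightarrow> complex \<Rightarrow> complex \<Rightarrow> nat \<Rightarrow> nat \<Rightarrow> complex" where
  "saalschutz_cert q l b c k j = (if j = 0 then 0 else
     (1 - l*q^(2*k+1)) / ((1 - l*q/b*q^k)*(1 - l*q/c*q^k))
     * (qpoch_nat (1/q^k) q (j-1) * qpoch_nat (l*q^(Suc k)) q (j-1) * qpoch_nat (l*q/(b*c)) q j)
     / (qpoch_nat q q (j-1) * qpoch_nat (l*q/b) q (j-1) * qpoch_nat (l*q/c) q (j-1)))"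

text \<open>The rational identities behind the recurrences are stated with the factors as variables and
  their values as hypotheses, so that \<open>field_simps\<close> clears denominators before expanding them.\<close>

lemma saalschutz_step_identity:
  fixes q x y l b c bt gm dl f1 f2 f3 e1 e2 :: complex
  assumes nz: "q \<noteq> 0" "x \<noteq> 0" "b \<noteq> 0" "c \<noteq> 0" "f1 \<noteq> 0" "f2 \<noteq> 0" "f3 \<noteq> 0"
     "e1 \<noteq> 0" "e2 \<noteq> 0"
  assumes dd: "bt = l*q/b" "gm = l*q/c" "dl = l*q/(b*c)"
  assumes ff: "f1 = 1-q*y" "f2 = 1-bt*y" "f3 = 1-gm*y" "e1 = 1 - bt*x" "e2 = 1 - gm*x"
  shows "(1 - 1/(q*x)) * (1 - l*(q*x)*y) * (q*y) / (f1*f2*f3)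
       - (1 - b*x)*(1-c*x)*dl / (e1*e2) * ((1 - 1/x*y) * (1 - l*x) * (q*y) / (f1*f2*f3))
       = (1 - l*q*x^2) / (e1*e2) * ((1 - 1/x*y) * (1 - l*(q*x)*y) * (1 - dl*(q*y)) / (f1*f2*f3) - 1)"
proof -
  have "(1 - 1/(q*x)) * (1 - l*(q*x)*y) * (q*y) / (f1*f2*f3)
       - (1 - b*x)*(1-c*x)*dl / (e1*e2) * ((1 - 1/x*y) * (1 - l*x) * (q*y) / (f1*f2*f3))
       - (1 - l*q*x^2) / (e1*e2) * ((1 - 1/x*y) * (1 - l*(q*x)*y) * (1 - dl*(q*y)) / (f1*f2*f3) - 1)
     = ((q*x - 1) * (1 - l*q*x*y) * y * e1 * e2
       - (1 - b*x)*(1-c*x)*dl * ((x - y) * (1 - l*x) * (q*y))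
       - (1 - l*q*x^2) * ((x - y) * (1 - l*q*x*y) * (1 - dl*(q*y)) - x * (f1*f2*f3)))
       / (x * (f1*f2*f3) * e1 * e2)"
    using nz by (simp add: field_simps)
  also have "\<dots> = 0"
    unfolding ff dd using nz by (simp add: field_simps power2_eq_square)
  finally show ?thesis by simp
qed

lemma saalschutz_step_identity_0:
  fixes q x l b c bt gm dl e1 e2 :: complex
  assumes nz: "q \<noteq> 0" "b \<noteq> 0" "c \<noteq> 0" "e1 \<noteq> 0" "e2 \<noteq> 0"
  assumes dd: "bt = l*q/b" "gm = l*q/c" "dl = l*q/(b*c)"
  assumes ff: "e1 = 1 - bt*x" "e2 = 1 - gm*x"
  shows "1 - (1 - b*x)*(1-c*x)*dl / (e1*e2) = (1 - l*q*x^2) / (e1*e2) * (1 - dl)"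
proof -
  have "1 - (1 - b*x)*(1-c*x)*dl / (e1*e2) - (1 - l*q*x^2) / (e1*e2) * (1 - dl)
     = (e1*e2 - (1 - b*x)*(1-c*x)*dl - (1 - l*q*x^2) * (1 - dl)) / (e1*e2)"
    using nz by (simp add: field_simps)
  also have "\<dots> = 0"
    unfolding ff dd using nz by (simp add: field_simps power2_eq_square)
  finally show ?thesis by simp
qed

lemma saalschutz_recurrence:
  fixes q l b c :: complex and k j :: nat
  defines "\<rho> \<equiv> (1 - b*q^k)*(1 - c*q^k)*(l*q/(b*c)) / ((1 - l*q/b*q^k)*(1 - l*q/c*q^k))"
  assumes nz: "q \<noteq> 0" "b \<noteq> 0" "c \<noteq> 0"
  assumes nzj: "qpoch_nat q q j \<noteq> 0" "qpoch_nat (l*q/b) q j \<noteq> 0" "qpoch_nat (l*q/c) q j \<noteq> 0"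
  assumes nzk: "1 - l*q/b*q^k \<noteq> 0" "1 - l*q/c*q^k \<noteq> 0"
  shows "saalschutz_term q l b c (Suc k) j
       = \<rho> * saalschutz_term q l b c k j + (saalschutz_cert q l b c k (Suc j) - saalschutz_cert q l b c k j)"
proof -
  define bt where "bt = l*q/b"
  define gm where "gm = l*q/c"
  define dl where "dl = l*q/(b*c)"
  note dd = bt_def gm_def dl_def
  have T: "saalschutz_term q l b c k' j' = qpoch_nat (1/q^k') q j' * qpoch_nat (l*q^k') q j'
      * qpoch_nat dl q j' / (qpoch_nat q q j' * qpoch_nat bt q j' * qpoch_nat gm q j') * q^j'" for k' j'
    by (simp add: saalschutz_term_def dd)
  have H: "saalschutz_cert q l b c k j' = (if j' = 0 then 0 else
     (1 - l*q^(2*k+1)) / ((1 - bt*q^k)*(1 - gm*q^k))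
     * (qpoch_nat (1/q^k) q (j'-1) * qpoch_nat (l*q^(Suc k)) q (j'-1) * qpoch_nat dl q j')
     / (qpoch_nat q q (j'-1) * qpoch_nat bt q (j'-1) * qpoch_nat gm q (j'-1)))" for j'
    by (simp add: saalschutz_cert_def dd)
  have \<rho>: "\<rho> = (1-b*q^k)*(1-c*q^k)*dl / ((1-bt*q^k)*(1-gm*q^k))"
    by (simp add: \<rho>_def dd)
  from nzj nzk have nzj: "qpoch_nat q q j \<noteq> 0" "qpoch_nat bt q j \<noteq> 0" "qpoch_nat gm q j \<noteq> 0"
    and nzk: "1 - bt*q^k \<noteq> 0" "1 - gm*q^k \<noteq> 0"
    by (simp_all add: dd)
  have "saalschutz_term q l b c (Suc k) j - \<rho> * saalschutz_term q l b c k j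
       = saalschutz_cert q l b c k (Suc j) - saalschutz_cert q l b c k j"
  proof (cases j)
    case 0
    then show ?thesis
      using saalschutz_step_identity_0[OF nz nzk dd refl refl]
      by (simp add: T H \<rho> qpoch_nat_Suc power_add power_mult power2_eq_square mult_ac)
  next
    case (Suc i)
    txt \<open>All four terms are the common factor \<open>P1*P2*P3/(Dq*Db*Dc)\<close> times a rational function
      of \<open>x = q\<^sup>k\<close> and \<open>y = q\<^sup>i\<close>, which reduces the claim to \<open>saalschutz_step_identity\<close>.\<close>
    define x where "x = q^k"
    define y where "y = q^i"
    define P1 where "P1 = qpoch_nat (1/q^k) q i"
    define P2 where "P2 = qpoch_nat (l*q^Suc k) q i"
    define P3 where "P3 = qpoch_nat dl q (Suc i)"
    define Dq where "Dq = qpoch_nat q q i"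
    define Db where "Db = qpoch_nat bt q i"
    define Dc where "Dc = qpoch_nat gm q i"
    have x0: "x \<noteq> 0" using nz by (simp add: x_def)
    have nzi: "Dq \<noteq> 0" "Db \<noteq> 0" "Dc \<noteq> 0" "1 - q*y \<noteq> 0" "1 - bt*y \<noteq> 0" "1 - gm*y \<noteq> 0"
      using nzj by (auto simp: Suc Dq_def Db_def Dc_def y_def qpoch_nat_Suc mult_ac)
    have nzk': "1 - bt*x \<noteq> 0" "1 - gm*x \<noteq> 0" using nzk by (auto simp: x_def)
    have E: "Dq * (1-q*y) * (Db * (1-bt*y)) * (Dc * (1-gm*y))
           = (Dq*Db*Dc) * ((1-q*y)*(1-bt*y)*(1-gm*y))"
      by (simp add: mult_ac)
    have c: "qpoch_nat q q (Suc i) = Dq * (1-q*y)" "qpoch_nat bt q (Suc i) = Db * (1-bt*y)"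
      "qpoch_nat gm q (Suc i) = Dc * (1-gm*y)"
      unfolding qpoch_nat_Suc Dq_def Db_def Dc_def y_def by (simp_all add: mult_ac)
    have T1: "saalschutz_term q l b c (Suc k) j = P1*P2*P3/(Dq*Db*Dc)
        * ((1 - 1/(q*x)) * (1 - l*(q*x)*y) * (q*y) / ((1-q*y)*(1-bt*y)*(1-gm*y)))"
    proof -
      have a: "qpoch_nat (1/q^Suc k) q (Suc i) = (1 - 1/(q*x)) * P1"
        unfolding qpoch_nat_Suc_shift P1_def x_def using nz by (simp add: field_simps)
      have b: "qpoch_nat (l*q^Suc k) q (Suc i) = P2 * (1 - l*(q*x)*y)"
        unfolding qpoch_nat_Suc P2_def x_def y_def by (simp add: mult_ac)
      show ?thesis unfolding T Suc a b c E P3_def[symmetric] using nzi nz(1) x0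
        by (simp add: y_def field_simps)
    qed
    have T2: "saalschutz_term q l b c k j = P1*P2*P3/(Dq*Db*Dc)
        * ((1 - 1/x*y) * (1 - l*x) * (q*y) / ((1-q*y)*(1-bt*y)*(1-gm*y)))"
    proof -
      have a: "qpoch_nat (1/q^k) q (Suc i) = P1 * (1 - 1/x*y)"
        unfolding qpoch_nat_Suc P1_def x_def y_def using nz by (simp add: field_simps)
      have b: "qpoch_nat (l*q^k) q (Suc i) = (1 - l*x) * P2"
        unfolding qpoch_nat_Suc_shift P2_def x_def by (simp add: mult_ac)
      show ?thesis unfolding T Suc a b c E P3_def[symmetric] using nzi nz(1) x0
        by (simp add: y_def field_simps)
    qed
    have xx: "q^(2*k+1) = q*x^2" by (simp add: x_def power_mult power_add mult_ac)
    have H2: "saalschutz_cert q l b c k (Suc j) = P1*P2*P3/(Dq*Db*Dc)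
        * ((1 - l*q*x^2) / ((1-bt*x)*(1-gm*x))
           * ((1 - 1/x*y) * (1 - l*(q*x)*y) * (1 - dl*(q*y)) / ((1-q*y)*(1-bt*y)*(1-gm*y))))"
    proof -
      have a: "qpoch_nat (1/x) q (Suc i) = P1 * (1 - 1/x*y)"
        unfolding qpoch_nat_Suc P1_def x_def y_def using nz by (simp add: field_simps)
      have b: "qpoch_nat (l*q^Suc k) q (Suc i) = P2 * (1 - l*(q*x)*y)"
        unfolding qpoch_nat_Suc P2_def x_def y_def by (simp add: mult_ac)
      have d: "qpoch_nat dl q (Suc (Suc i)) = P3 * (1 - dl*(q*y))"
        unfolding qpoch_nat_Suc[of _ _ "Suc i"] P3_def y_def by (simp add: mult_ac)
      have h: "saalschutz_cert q l b c k (Suc j) = (1 - l*q^(2*k+1)) / ((1 - bt*q^k)*(1 - gm*q^k))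
          * (qpoch_nat (1/q^k) q (Suc i) * qpoch_nat (l*q^(Suc k)) q (Suc i) * qpoch_nat dl q (Suc (Suc i)))
          / (qpoch_nat q q (Suc i) * qpoch_nat bt q (Suc i) * qpoch_nat gm q (Suc i))"
        unfolding H Suc by simp
      show ?thesis unfolding h x_def[symmetric] xx unfolding a b c d E using nzi nzk' nz(1) x0
        by (simp add: field_simps)
    qed
    have H1: "saalschutz_cert q l b c k j = P1*P2*P3/(Dq*Db*Dc) * ((1 - l*q*x^2) / ((1-bt*x)*(1-gm*x)))"
      unfolding H Suc P1_def P2_def P3_def Dq_def Db_def Dc_def x_def[symmetric] xx
      using nzi nzk' nz(1) x0 by (simp add: field_simps)
    have K: "(1 - 1/(q*x)) * (1 - l*(q*x)*y) * (q*y) / ((1-q*y)*(1-bt*y)*(1-gm*y))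
       - (1 - b*x)*(1-c*x)*dl / ((1-bt*x)*(1-gm*x))
         * ((1 - 1/x*y) * (1 - l*x) * (q*y) / ((1-q*y)*(1-bt*y)*(1-gm*y)))
       = (1 - l*q*x^2) / ((1-bt*x)*(1-gm*x))
         * ((1 - 1/x*y) * (1 - l*(q*x)*y) * (1 - dl*(q*y)) / ((1-q*y)*(1-bt*y)*(1-gm*y)) - 1)"
      by (rule saalschutz_step_identity[OF nz(1) x0 nz(2,3) nzi(4-6) nzk' dd refl refl refl refl refl])
    have factor_out: "P*t1 - r*(P*t2) = P*(C*S) - P*C" if "t1 - r*t2 = C*(S-1)"
      for P t1 t2 r C S :: complex
      by (metis that mult.assoc mult.left_commute right_diff_distrib mult.right_neutral)
    show ?thesis unfolding T1 T2 H1 H2 \<rho> x_def[symmetric] by (rule factor_out[OF K])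
  qed
  then show ?thesis by (simp add: algebra_simps)
qed

lemma q_saalschutz:
  fixes q l b c :: complex
  assumes nz: "q \<noteq> 0" "b \<noteq> 0" "c \<noteq> 0"
  shows "qpoch_nat q q k \<noteq> 0 \<Longrightarrow> qpoch_nat (l*q/b) q k \<noteq> 0 \<Longrightarrow> qpoch_nat (l*q/c) q k \<noteq> 0 \<Longrightarrow>
    (\<Sum>j\<le>k. saalschutz_term q l b c k j)
      = qpoch_nat b q k * qpoch_nat c q k / (qpoch_nat (l*q/b) q k * qpoch_nat (l*q/c) q k) * (l*q/(b*c))^k"
proof (induction k)
  case 0
  then show ?case by (simp add: saalschutz_term_def)
next
  case (Suc k)
  have nk: "qpoch_nat q q k \<noteq> 0" "qpoch_nat (l*q/b) q k \<noteq> 0" "qpoch_nat (l*q/c) q k \<noteq> 0"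
    using Suc.prems qpoch_nat_nonzero_le[of k "Suc k"] by auto
  have e: "1 - l*q/b*q^k \<noteq> 0" "1 - l*q/c*q^k \<noteq> 0" using Suc.prems by (auto simp: qpoch_nat_Suc)
  have "(\<Sum>j\<le>Suc k. saalschutz_term q l b c (Suc k) j)
      = (1 - b*q^k)*(1 - c*q^k)*(l*q/(b*c)) / ((1 - l*q/b*q^k)*(1 - l*q/c*q^k))
        * (\<Sum>j\<le>k. saalschutz_term q l b c k j)"
  proof (rule sum_atMost_telescoping_recurrence)
    fix j assume "j \<le> Suc k"
    then show "saalschutz_term q l b c (Suc k) j
       = (1 - b*q^k)*(1 - c*q^k)*(l*q/(b*c)) / ((1 - l*q/b*q^k)*(1 - l*q/c*q^k)) * saalschutz_term q l b c k j
         + (saalschutz_cert q l b c k (Suc j) - saalschutz_cert q l b c k j)"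
      using Suc.prems qpoch_nat_nonzero_le by (intro saalschutz_recurrence[OF nz _ _ _ e]) auto
  qed (use qpoch_nat_inverse_power_eq_0[OF nz(1), of k "Suc k"]
       in \<open>simp_all add: saalschutz_term_def saalschutz_cert_def\<close>)
  also have "\<dots> = qpoch_nat b q (Suc k) * qpoch_nat c q (Suc k)
      / (qpoch_nat (l*q/b) q (Suc k) * qpoch_nat (l*q/c) q (Suc k)) * (l*q/(b*c))^Suc k"
    using Suc.IH nk e by (simp add: qpoch_nat_Suc field_simps)
  finally show ?case .
qed

section \<open>The terminating very-well-poised \<open>\<^sub>6\<phi>\<^sub>5\<close> summation\<close>

definition vwp6_term :: "complex \<Rightarrow> complex \<Rightarrow> complex \<Rightarrow> complex \<Rightarrow> nat \<Rightarrow> nat \<Rightarrow> complex" where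
  "vwp6_term q A D E M m = (1 - A*q^(2*m))/(1-A)
     * (qpoch_nat A q m * qpoch_nat D q m * qpoch_nat E q m * qpoch_nat (1/q^M) q m)
     / (qpoch_nat q q m * qpoch_nat (A*q/D) q m * qpoch_nat (A*q/E) q m * qpoch_nat (A*q^(M+1)) q m)
     * (A*q^(M+1)/(D*E))^m"

definition vwp6_cert :: "complex \<Rightarrow> complex \<Rightarrow> complex \<Rightarrow> complex \<Rightarrow> nat \<Rightarrow> nat \<Rightarrow> complex" where
  "vwp6_cert q A D E M m = (if m = 0 then 0 else
     qpoch_nat (A*q) q (m-1) * qpoch_nat D q m * qpoch_nat E q m * qpoch_nat (1/q^M) q (m-1)
     / ((1 - A*q/D*q^M)*(1 - A*q/E*q^M) * qpoch_nat q q (m-1) * qpoch_nat (A*q/D) q (m-1)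
        * qpoch_nat (A*q/E) q (m-1) * qpoch_nat (A*q^(M+2)) q (m-1))
     * (A*q^(M+1)/(D*E))^m)"

lemma vwp6_step_identity:
  fixes q x y A D E al ep w f1 f2 f3 g h e1 e2 :: complex
  assumes nz: "q \<noteq> 0" "x \<noteq> 0" "D \<noteq> 0" "E \<noteq> 0" "f1 \<noteq> 0" "f2 \<noteq> 0" "f3 \<noteq> 0"
     "g \<noteq> 0" "h \<noteq> 0" "e1 \<noteq> 0" "e2 \<noteq> 0"
  assumes dd: "al = A*q/D" "ep = A*q/E" "w = A*q*x/(D*E)"
  assumes ff: "f1 = 1-q*y" "f2 = 1-al*y" "f3 = 1-ep*y" "g = 1 - A*q^2*x*y" "h = 1 - A*q*x"
     "e1 = 1 - al*x" "e2 = 1 - ep*x"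
  shows "(1-A*q^2*y^2)*(1-1/(q*x))/(f1*f2*f3*g)*(q*y)
     - h*(1-w)/(e1*e2) * ((1-A*q^2*y^2)*(1-y/x)/(f1*f2*f3*h))
     = (1-A*q*y)*(1-D*q*y)*(1-E*q*y)*(1-y/x)/(e1*e2*f1*f2*f3*g)*w - 1/(e1*e2)"
proof -
  have "(1-A*q^2*y^2)*(1-1/(q*x))/(f1*f2*f3*g)*(q*y)
     - h*(1-w)/(e1*e2) * ((1-A*q^2*y^2)*(1-y/x)/(f1*f2*f3*h))
     - ((1-A*q*y)*(1-D*q*y)*(1-E*q*y)*(1-y/x)/(e1*e2*f1*f2*f3*g)*w - 1/(e1*e2))
     = ((1-A*q^2*y^2)*(q*x-1)*(q*y)*e1*e2 - (1-w)*(1-A*q^2*y^2)*(x-y)*q*g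
        - (1-A*q*y)*(1-D*q*y)*(1-E*q*y)*(x-y)*q*w + q*x*f1*f2*f3*g) / (q*x*f1*f2*f3*g*e1*e2)"
    using nz by (simp add: field_simps)
  also have "\<dots> = 0"
    unfolding ff dd using nz by (simp add: field_simps power2_eq_square)
  finally show ?thesis by simp
qed

lemma vwp6_step_identity_0:
  fixes q x A D E al ep e1 e2 :: complex
  assumes nz: "q \<noteq> 0" "D \<noteq> 0" "E \<noteq> 0" "e1 \<noteq> 0" "e2 \<noteq> 0"
  assumes dd: "al = A*q/D" "ep = A*q/E"
  assumes ff: "e1 = 1 - al*x" "e2 = 1 - ep*x"
  shows "1 - (1 - A*q*x)*(1 - A*q*x/(D*E))/(e1*e2) = (1-D)*(1-E)/(e1*e2) * (A*q*x/(D*E))"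
proof -
  have "1 - (1 - A*q*x)*(1 - A*q*x/(D*E))/(e1*e2) - (1-D)*(1-E)/(e1*e2) * (A*q*x/(D*E))
     = (e1*e2 - (1 - A*q*x)*(1 - A*q*x/(D*E)) - (1-D)*(1-E) * (A*q*x/(D*E)))/(e1*e2)"
    using nz by (simp add: field_simps)
  also have "\<dots> = 0"
    unfolding ff dd using nz by (simp add: field_simps)
  finally show ?thesis by simp
qed

lemma vwp6_recurrence:
  fixes q A D E :: complex and M m :: nat
  defines "\<rho> \<equiv> (1 - A*q^(M+1))*(1 - A*q^(M+1)/(D*E))/((1 - A*q/D*q^M)*(1 - A*q/E*q^M))"
  assumes nz: "q \<noteq> 0" "D \<noteq> 0" "E \<noteq> 0" "1 - A \<noteq> 0"
  assumes nzm: "qpoch_nat q q m \<noteq> 0" "qpoch_nat (A*q/D) q m \<noteq> 0" "qpoch_nat (A*q/E) q m \<noteq> 0"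
    "qpoch_nat (A*q^(M+2)) q m \<noteq> 0"
  assumes nzM: "1 - A*q^(M+1) \<noteq> 0" "1 - A*q/D*q^M \<noteq> 0" "1 - A*q/E*q^M \<noteq> 0"
  shows "vwp6_term q A D E (Suc M) m
       = \<rho> * vwp6_term q A D E M m + (vwp6_cert q A D E M (Suc m) - vwp6_cert q A D E M m)"
proof -
  define al where "al = A*q/D"
  define ep where "ep = A*q/E"
  note dd = al_def ep_def
  have T: "vwp6_term q A D E M' m' = (1 - A*q^(2*m'))/(1-A)
     * (qpoch_nat A q m' * qpoch_nat D q m' * qpoch_nat E q m' * qpoch_nat (1/q^M') q m')
     / (qpoch_nat q q m' * qpoch_nat al q m' * qpoch_nat ep q m' * qpoch_nat (A*q^(M'+1)) q m')
     * (A*q^(M'+1)/(D*E))^m'" for M' m'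
    by (simp add: vwp6_term_def dd)
  have H: "vwp6_cert q A D E M m' = (if m' = 0 then 0 else
     qpoch_nat (A*q) q (m'-1) * qpoch_nat D q m' * qpoch_nat E q m' * qpoch_nat (1/q^M) q (m'-1)
     / ((1 - al*q^M)*(1-ep*q^M) * qpoch_nat q q (m'-1) * qpoch_nat al q (m'-1) * qpoch_nat ep q (m'-1)
        * qpoch_nat (A*q^(M+2)) q (m'-1))
     * (A*q^(M+1)/(D*E))^m')" for m'
    by (simp add: vwp6_cert_def dd)
  have factor_out: "P*t1 - r*(P*t2) = P*S1 - P*S2" if "t1 - r*t2 = S1 - S2" for P t1 t2 r S1 S2 :: complex
    by (metis that mult.left_commute right_diff_distrib)
  from nzm nzM have nzm: "qpoch_nat q q m \<noteq> 0" "qpoch_nat al q m \<noteq> 0" "qpoch_nat ep q m \<noteq> 0"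
      "qpoch_nat (A*q^(M+2)) q m \<noteq> 0"
    and nzM: "1 - A*q^(M+1) \<noteq> 0" "1 - al*q^M \<noteq> 0" "1 - ep*q^M \<noteq> 0"
    by (simp_all add: dd)
  have "vwp6_term q A D E (Suc M) m
      - (1 - A*q^(M+1))*(1 - A*q^(M+1)/(D*E))/((1-al*q^M)*(1-ep*q^M)) * vwp6_term q A D E M m
      = vwp6_cert q A D E M (Suc m) - vwp6_cert q A D E M m"
  proof (cases m)
    case 0
    have "1 - (1 - A*q*q^M)*(1 - A*q*q^M/(D*E))/((1-al*q^M)*(1-ep*q^M))
        = (1-D)*(1-E)/((1-al*q^M)*(1-ep*q^M)) * (A*q*q^M/(D*E))"
      by (rule vwp6_step_identity_0[OF nz(1-3) nzM(2,3) dd refl refl])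
    then show ?thesis using 0 nz(4) by (simp add: T H qpoch_nat_Suc mult_ac)
  next
    case (Suc i)
    txt \<open>As for \<open>saalschutz_recurrence\<close>: all four terms are \<open>PP\<close> times a rational function of
      \<open>x = q\<^sup>M\<close> and \<open>y = q\<^sup>i\<close>.\<close>
    define x where "x = q^M"
    define y where "y = q^i"
    define w where "w = A*q*x/(D*E)"
    define Z where "Z = w^i"
    define PA where "PA = qpoch_nat (A*q) q i"
    define PD where "PD = qpoch_nat D q i"
    define PE where "PE = qpoch_nat E q i"
    define P1 where "P1 = qpoch_nat (1/q^M) q i"
    define Dq where "Dq = qpoch_nat q q i"
    define Dal where "Dal = qpoch_nat al q i"
    define Dep where "Dep = qpoch_nat ep q i"
    define DA2 where "DA2 = qpoch_nat (A*q^(M+2)) q i"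
    define f1 where "f1 = 1-q*y"
    define f2 where "f2 = 1-al*y"
    define f3 where "f3 = 1-ep*y"
    define g where "g = 1 - A*q^2*x*y"
    define h where "h = 1 - A*q*x"
    define e1 where "e1 = 1 - al*x"
    define e2 where "e2 = 1 - ep*x"
    define PP where "PP = PA*PD*PE*P1*Z/(Dq*Dal*Dep*DA2) * ((1-D*y)*(1-E*y)*w)"
    have x0: "x \<noteq> 0" using nz by (simp add: x_def)
    have nzi: "Dq \<noteq> 0" "Dal \<noteq> 0" "Dep \<noteq> 0" "DA2 \<noteq> 0" "f1 \<noteq> 0" "f2 \<noteq> 0" "f3 \<noteq> 0" "g \<noteq> 0"
      using nzm by (auto simp: Suc Dq_def Dal_def Dep_def DA2_def f1_def f2_def f3_def g_def x_def y_def qpoch_nat_Suc power_add mult_ac power2_eq_square)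
    have nzM': "h \<noteq> 0" "e1 \<noteq> 0" "e2 \<noteq> 0" using nzM by (auto simp: h_def e1_def e2_def x_def mult_ac)
    have c: "qpoch_nat q q (Suc i) = Dq * f1" "qpoch_nat al q (Suc i) = Dal * f2"
      "qpoch_nat ep q (Suc i) = Dep * f3"
      "qpoch_nat D q (Suc i) = PD * (1-D*y)" "qpoch_nat E q (Suc i) = PE * (1-E*y)"
      unfolding qpoch_nat_Suc Dq_def Dal_def Dep_def PD_def PE_def y_def f1_def f2_def f3_def
          by (simp_all add: mult_ac)
    have T1: "vwp6_term q A D E (Suc M) m = PP * ((1-A*q^2*y^2)*(1-1/(q*x))/(f1*f2*f3*g)*(q*y))"
    proof -
      have a0: "1 - A*q^(2*Suc i) = 1 - A*q^2*y^2"
          by (simp add: y_def power_mult_distrib power_mult power2_eq_square mult_ac)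
      have a1: "qpoch_nat A q (Suc i) = (1-A) * PA" unfolding qpoch_nat_Suc_shift PA_def ..
      have a2: "qpoch_nat (1/q^(Suc M)) q (Suc i) = (1 - 1/(q*x)) * P1"
        unfolding qpoch_nat_Suc_shift P1_def x_def using nz by (simp add: field_simps)
      have a3: "qpoch_nat (A*q^(Suc M+1)) q (Suc i) = DA2 * g"
        unfolding qpoch_nat_Suc DA2_def g_def x_def y_def by (simp add: power_add mult_ac power2_eq_square)
      have a4': "A*q^(Suc M+1)/(D*E) = q*w" unfolding w_def x_def by (simp add: mult_ac)
      have a4: "(A*q^(Suc M+1)/(D*E))^(Suc i) = (q*y)*w*Z"
        unfolding a4' Z_def y_def by (simp add: power_mult_distrib mult_ac)
      show ?thesis unfolding T Suc a0 a1 a2 a3 a4 c PP_def using nzi nz x0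
        by (simp add: field_simps)
    qed
    have T2: "vwp6_term q A D E M m = PP * ((1-A*q^2*y^2)*(1-y/x)/(f1*f2*f3*h))"
    proof -
      have a0: "1 - A*q^(2*Suc i) = 1 - A*q^2*y^2"
          by (simp add: y_def power_mult_distrib power_mult power2_eq_square mult_ac)
      have a1: "qpoch_nat A q (Suc i) = (1-A) * PA" unfolding qpoch_nat_Suc_shift PA_def ..
      have a2: "qpoch_nat (1/q^M) q (Suc i) = P1 * (1 - y/x)"
        unfolding qpoch_nat_Suc P1_def x_def y_def using nz by (simp add: field_simps)
      have a3: "qpoch_nat (A*q^(M+1)) q (Suc i) = h * DA2"
        unfolding qpoch_nat_Suc_shift DA2_def h_def x_def by (simp add: power_add mult_ac numeral_2_eq_2)
      have a4: "(A*q^(M+1)/(D*E))^(Suc i) = w*Z"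
        unfolding w_def Z_def x_def by (simp add: mult_ac)
      show ?thesis unfolding T Suc a0 a1 a2 a3 a4 c PP_def using nzi nz x0 nzM'
        by (simp add: field_simps)
    qed
    have H2: "vwp6_cert q A D E M (Suc m) = PP * ((1-A*q*y)*(1-D*q*y)*(1-E*q*y)*(1-y/x)/(e1*e2*f1*f2*f3*g)*w)"
    proof -
      have hh: "vwp6_cert q A D E M (Suc m) = qpoch_nat (A*q) q (Suc i)
          * qpoch_nat D q (Suc (Suc i)) * qpoch_nat E q (Suc (Suc i)) * qpoch_nat (1/q^M) q (Suc i)
       / (e1*e2 * qpoch_nat q q (Suc i) * qpoch_nat al q (Suc i) * qpoch_nat ep q (Suc i)
           * qpoch_nat (A*q^(M+2)) q (Suc i))
       * (A*q*x/(D*E))^(Suc (Suc i))" unfolding H Suc e1_def e2_def x_def by (simp add: mult_ac)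
      have a1: "qpoch_nat (A*q) q (Suc i) = PA * (1 - A*q*y)" unfolding qpoch_nat_Suc PA_def y_def
          by (simp add: mult_ac)
      have a2: "qpoch_nat (1/q^M) q (Suc i) = P1 * (1 - y/x)"
        unfolding qpoch_nat_Suc P1_def x_def y_def using nz by (simp add: field_simps)
      have a3: "qpoch_nat (A*q^(M+2)) q (Suc i) = DA2 * g"
        unfolding qpoch_nat_Suc DA2_def g_def x_def y_def by (simp add: power_add mult_ac power2_eq_square)
      have a4: "(A*q*x/(D*E))^(Suc (Suc i)) = w*w*Z"
        unfolding w_def Z_def by (simp add: mult_ac)
      have a5: "qpoch_nat D q (Suc (Suc i)) = PD * (1-D*y) * (1-D*q*y)"
        "qpoch_nat E q (Suc (Suc i)) = PE * (1-E*y) * (1-E*q*y)"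
        unfolding qpoch_nat_Suc[of _ _ "Suc i"] c y_def by (simp_all add: mult_ac)
      show ?thesis unfolding hh a1 a2 a3 a4 a5 c PP_def using nzi nz x0 nzM'
        by (simp add: field_simps)
    qed
    have H1: "vwp6_cert q A D E M m = PP * (1/(e1*e2))"
    proof -
      have hh: "vwp6_cert q A D E M m = PA * qpoch_nat D q (Suc i) * qpoch_nat E q (Suc i) * P1
       / (e1*e2 * Dq * Dal * Dep * DA2) * (A*q*x/(D*E))^(Suc i)"
        unfolding H Suc PA_def P1_def Dq_def Dal_def Dep_def DA2_def x_def e1_def e2_def
            by (simp add: mult_ac)
      have a4: "(A*q*x/(D*E))^(Suc i) = w*Z"
        unfolding w_def Z_def by (simp add: mult_ac)
      show ?thesis unfolding hh a4 c PP_def using nzi nz x0 nzM'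
        by (simp add: field_simps)
    qed
    have K: "(1-A*q^2*y^2)*(1-1/(q*x))/(f1*f2*f3*g)*(q*y)
       - h*(1-w)/(e1*e2) * ((1-A*q^2*y^2)*(1-y/x)/(f1*f2*f3*h))
       = (1-A*q*y)*(1-D*q*y)*(1-E*q*y)*(1-y/x)/(e1*e2*f1*f2*f3*g)*w - 1/(e1*e2)"
      by (rule vwp6_step_identity[OF nz(1) x0 nz(2,3) nzi(5-8) nzM' dd w_def f1_def f2_def f3_def g_def h_def e1_def e2_def])
    have rho: "(1 - A*q^(M+1))*(1 - A*q^(M+1)/(D*E))/((1-al*q^M)*(1-ep*q^M)) = h*(1-w)/(e1*e2)"
      unfolding w_def x_def h_def e1_def e2_def by (simp add: mult_ac)
    show ?thesis unfolding T1 T2 H1 H2 rho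
      by (rule factor_out[OF K])
  qed

  then show ?thesis unfolding \<rho>_def dd by (simp add: algebra_simps)
qed

lemma vwp6_summation:
  fixes q A D E :: complex
  assumes nz: "q \<noteq> 0" "D \<noteq> 0" "E \<noteq> 0" "1 - A \<noteq> 0"
  assumes nA: "\<And>i. A*q^Suc i \<noteq> 1"
  shows "qpoch_nat q q M \<noteq> 0 \<Longrightarrow> qpoch_nat (A*q/D) q M \<noteq> 0 \<Longrightarrow> qpoch_nat (A*q/E) q M \<noteq> 0 \<Longrightarrow>
    (\<Sum>m\<le>M. vwp6_term q A D E M m)
      = qpoch_nat (A*q) q M * qpoch_nat (A*q/(D*E)) q M / (qpoch_nat (A*q/D) q M * qpoch_nat (A*q/E) q M)"
proof (induction M)
  case 0
  then show ?case using nz(4) by (simp add: vwp6_term_def)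
next
  case (Suc M)
  have nk: "qpoch_nat q q M \<noteq> 0" "qpoch_nat (A*q/D) q M \<noteq> 0" "qpoch_nat (A*q/E) q M \<noteq> 0"
    using Suc.prems qpoch_nat_nonzero_le[of M "Suc M"] by auto
  have e: "1 - A*q/D*q^M \<noteq> 0" "1 - A*q/E*q^M \<noteq> 0" using Suc.prems by (auto simp: qpoch_nat_Suc)
  have hA: "1 - A*q^(M+1) \<noteq> 0" using nA[of M] by simp
  have "(\<Sum>m\<le>Suc M. vwp6_term q A D E (Suc M) m)
      = (1 - A*q^(M+1))*(1 - A*q^(M+1)/(D*E))/((1 - A*q/D*q^M)*(1 - A*q/E*q^M))
        * (\<Sum>m\<le>M. vwp6_term q A D E M m)"
  proof (rule sum_atMost_telescoping_recurrence)
    fix m assume "m \<le> Suc M"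
    then show "vwp6_term q A D E (Suc M) m
      = (1 - A*q^(M+1))*(1 - A*q^(M+1)/(D*E))/((1 - A*q/D*q^M)*(1 - A*q/E*q^M)) * vwp6_term q A D E M m
        + (vwp6_cert q A D E M (Suc m) - vwp6_cert q A D E M m)"
      using Suc.prems qpoch_nat_nonzero_le qpoch_nat_shift_nonzero[OF nA, of "Suc M" m]
      by (intro vwp6_recurrence[OF nz _ _ _ _ hA e]) auto
  qed (use qpoch_nat_inverse_power_eq_0[OF nz(1), of M "Suc M"]
       in \<open>simp_all add: vwp6_term_def vwp6_cert_def\<close>)
  also have "\<dots> = qpoch_nat (A*q) q (Suc M) * qpoch_nat (A*q/(D*E)) q (Suc M)
      / (qpoch_nat (A*q/D) q (Suc M) * qpoch_nat (A*q/E) q (Suc M))"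
    unfolding Suc.IH[OF nk] using nk e nz by (simp add: qpoch_nat_Suc field_simps)
  finally show ?case .
qed

section \<open>Watson's transformation\<close>

text \<open>Watson's \<open>\<^sub>8\<phi>\<^sub>7\<close> term with the factor \<open>(b, c)\<^sub>k (\<lambda>q/bc)\<^sup>k / (\<lambda>q/b, \<lambda>q/c)\<^sub>k\<close> removed; that
  factor is the value of a q-Saalschuetz sum.\<close>

definition watson_weight :: "complex \<Rightarrow> complex \<Rightarrow> complex \<Rightarrow> complex \<Rightarrow> nat \<Rightarrow> nat \<Rightarrow> complex" where
  "watson_weight q l d e N k = (1 - l*q^(2*k))/(1-l)
     * (qpoch_nat l q k * qpoch_nat d q k * qpoch_nat e q k * qpoch_nat (1/q^N) q k)
     / (qpoch_nat q q k * qpoch_nat (l*q/d) q k * qpoch_nat (l*q/e) q k * qpoch_nat (l*q^(N+1)) q k)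
     * (l*q^(N+1)/(d*e))^k"

text \<open>After the shift \<open>k = j + m\<close>, the part of the weight that does not depend on \<open>m\<close>.\<close>

definition watson_shift_factor :: "complex \<Rightarrow> complex \<Rightarrow> complex \<Rightarrow> complex \<Rightarrow> nat \<Rightarrow> nat \<Rightarrow> complex" where
  "watson_shift_factor q l d e N j =
     qpoch_nat (l*q) q (2*j) * qpoch_nat d q j * qpoch_nat e q j * qpoch_nat (1/q^N) q j
     / (qpoch_nat (l*q/d) q j * qpoch_nat (l*q/e) q j * qpoch_nat (l*q^(N+1)) q j)
     * (l*q^(N+1)/(d*e))^j * (-1)^j / qpow_triangular q j"

lemma watson_weight_shift:
  fixes q l d e :: complex
  assumes nz: "q \<noteq> 0" "d \<noteq> 0" "e \<noteq> 0" "1 - l \<noteq> 0" "1 - l*q^(2*j) \<noteq> 0"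
  assumes nq: "qpoch_nat q q m \<noteq> 0" "qpoch_nat (q^(m+1)) q j \<noteq> 0"
     "qpoch_nat (l*q/d) q j \<noteq> 0" "qpoch_nat (l*q/e) q j \<noteq> 0"
     "qpoch_nat (l*q^(j+1)/d) q m \<noteq> 0" "qpoch_nat (l*q^(j+1)/e) q m \<noteq> 0"
     "qpoch_nat (l*q^(j+M+1)) q j \<noteq> 0" "qpoch_nat (l*q^(2*j)*q^(M+1)) q m \<noteq> 0"
  shows "watson_weight q l d e (j+M) (j+m) * (qpoch_nat (1/q^(j+m)) q j * qpoch_nat (l*q^(j+m)) q j)
     = watson_shift_factor q l d e (j+M) j * vwp6_term q (l*q^(2*j)) (d*q^j) (e*q^j) M m"
proof -
  have tz: "qpow_triangular q j \<noteq> 0" using qpow_triangular_nonzero[OF nz(1)] .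
  have s1: "qpoch_nat l q (j+m) * qpoch_nat (l*q^(j+m)) q j = qpoch_nat l q (2*j) * qpoch_nat (l*q^(2*j)) q m"
    using qpoch_nat_add[of l q "j+m" j] qpoch_nat_add[of l q "2*j" m]
    by (metis add.commute add.left_commute mult_2)
  have s1': "qpoch_nat (l*q) q (2*j) = qpoch_nat l q (2*j) * (1 - l*q^(2*j))/(1-l)"
  proof -
    have "(1-l) * qpoch_nat (l*q) q (2*j) = qpoch_nat l q (2*j) * (1 - l*q^(2*j))"
      using qpoch_nat_Suc qpoch_nat_Suc_shift by metis
    then show ?thesis using nz(4) by (simp add: field_simps)
  qed
  have s2: "qpoch_nat d q (j+m) = qpoch_nat d q j * qpoch_nat (d*q^j) q m"
    "qpoch_nat e q (j+m) = qpoch_nat e q j * qpoch_nat (e*q^j) q m"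
    by (rule qpoch_nat_add)+
  have s3: "qpoch_nat (1/q^(j+M)) q (j+m) = qpoch_nat (1/q^(j+M)) q j * qpoch_nat (1/q^M) q m"
    using qpoch_nat_add[of "1/q^(j+M)" q j m] nz(1) by (simp add: power_add)
  have s4: "qpoch_nat q q (j+m) = qpoch_nat q q m * qpoch_nat (q^(m+1)) q j"
    using qpoch_nat_add[of q q m j] by (simp add: add.commute mult.commute)
  have s5: "qpoch_nat (1/q^(j+m)) q j = (-1)^j / (q^(j*m) * qpow_triangular q j) * qpoch_nat (q^(m+1)) q j"
    by (rule qpoch_nat_inverse_power[OF nz(1)])
  have s6: "qpoch_nat (l*q/d) q (j+m) = qpoch_nat (l*q/d) q j * qpoch_nat (l*q^(j+1)/d) q m"
    "qpoch_nat (l*q/e) q (j+m) = qpoch_nat (l*q/e) q j * qpoch_nat (l*q^(j+1)/e) q m"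
    using qpoch_nat_add[of "l*q/d" q j m] qpoch_nat_add[of "l*q/e" q j m] by (simp_all add: mult_ac)
  have s7: "qpoch_nat (l*q^(j+M+1)) q (j+m) = qpoch_nat (l*q^(j+M+1)) q j * qpoch_nat (l*q^(2*j)*q^(M+1)) q m"
    using qpoch_nat_add[of "l*q^(j+M+1)" q j m] by (simp add: power_add mult_ac mult_2 mult_2_right)
  have s8: "(l*q^(j+M+1)/(d*e))^(j+m)
      = (l*q^(j+M+1)/(d*e))^j * (l*q^(2*j)*q^(M+1)/(d*q^j*(e*q^j)))^m * q^(j*m)"
  proof -
    define u where "u = l*q^(2*j)*q^(M+1)/(d*q^j*(e*q^j))"
    have h: "l*q^(j+M+1)/(d*e) = u * q^j"
      unfolding u_def using nz by (simp add: field_simps power_add mult_2 mult_2_right)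
    show ?thesis unfolding h u_def[symmetric] by (simp add: power_add power_mult_distrib power_mult)
  qed
  have s9: "1 - l*q^(2*(j+m)) = 1 - l*q^(2*j)*q^(2*m)" by (simp add: power_add mult_ac)
  have s10: "l*q^(2*j)*q/(d*q^j) = l*q^(j+1)/d" "l*q^(2*j)*q/(e*q^j) = l*q^(j+1)/e"
    using nz by (simp_all add: field_simps power_add mult_2 mult_2_right)
  have lhs: "watson_weight q l d e (j+M) (j+m) * (qpoch_nat (1/q^(j+m)) q j * qpoch_nat (l*q^(j+m)) q j)
     = (1 - l*q^(2*j)*q^(2*m))/(1-l)
       * ((qpoch_nat l q (2*j) * qpoch_nat (l*q^(2*j)) q m) * (qpoch_nat d q j * qpoch_nat (d*q^j) q m)
          * (qpoch_nat e q j * qpoch_nat (e*q^j) q m) * (qpoch_nat (1/q^(j+M)) q j * qpoch_nat (1/q^M) q m))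
       / ((qpoch_nat q q m * qpoch_nat (q^(m+1)) q j) * (qpoch_nat (l*q/d) q j * qpoch_nat (l*q^(j+1)/d) q m)
          * (qpoch_nat (l*q/e) q j * qpoch_nat (l*q^(j+1)/e) q m)
          * (qpoch_nat (l*q^(j+M+1)) q j * qpoch_nat (l*q^(2*j)*q^(M+1)) q m))
       * ((l*q^(j+M+1)/(d*e))^j * (l*q^(2*j)*q^(M+1)/(d*q^j*(e*q^j)))^m * q^(j*m))
       * ((-1)^j / (q^(j*m) * qpow_triangular q j) * qpoch_nat (q^(m+1)) q j)"
    unfolding watson_weight_def s1[symmetric] s2 s3 s4 s5[symmetric] s6 s7 s8[symmetric] s9[symmetric]
    by (simp add: mult_ac add.commute)
  define Xj where "Xj = (l*q^(j+M+1)/(d*e))^j"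
  define Um where "Um = (l*q^(2*j)*q^(M+1)/(d*q^j*(e*q^j)))^m"
  define Qjm where "Qjm = q^(j*m)"
  define Am where "Am = 1 - l*q^(2*j)*q^(2*m)"
  define A1 where "A1 = 1 - l*q^(2*j)"
  have qz: "Qjm \<noteq> 0" using nz by (simp add: Qjm_def)
  have a1: "A1 \<noteq> 0" using nz by (simp add: A1_def)
  have s1'': "qpoch_nat (l*q) q (2*j) = qpoch_nat l q (2*j) * A1/(1-l)" unfolding s1' A1_def ..
  show ?thesis unfolding lhs watson_shift_factor_def vwp6_term_def s1'' s10
    unfolding Xj_def[symmetric] Um_def[symmetric] Qjm_def[symmetric] Am_def[symmetric] A1_def[symmetric]
    using nz(4) nq tz qz a1 by (simp add: field_simps)
qed

lemma watson_shift_factor_collapse: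
  fixes q l d e :: complex
  assumes nz: "q \<noteq> 0" "l \<noteq> 0" "d \<noteq> 0" "e \<noteq> 0"
  assumes nq: "qpoch_nat (l*q/d) q (j+M) \<noteq> 0" "qpoch_nat (l*q/e) q (j+M) \<noteq> 0" "qpoch_nat (l*q^(j+M+1)) q j \<noteq> 0"
     "qpoch_nat (d*e/(l*q^(j+M))) q j \<noteq> 0"
  shows "watson_shift_factor q l d e (j+M) j * (qpoch_nat (l*q^(2*j)*q) q M
      * qpoch_nat (l*q^(2*j)*q/(d*q^j*(e*q^j))) q M
            / (qpoch_nat (l*q^(j+1)/d) q M * qpoch_nat (l*q^(j+1)/e) q M))
       = qpoch_nat (l*q) q (j+M) * qpoch_nat (l*q/(d*e)) q (j+M) / (qpoch_nat (l*q/d) q (j+M)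
           * qpoch_nat (l*q/e) q (j+M))
         * (qpoch_nat (1/q^(j+M)) q j * qpoch_nat d q j * qpoch_nat e q j / qpoch_nat (d*e/(l*q^(j+M))) q j)"
proof -
  define G where "G = (l*q^(j+M+1)/(d*e))^j"
  define Qd where "Qd = qpoch_nat (d*e/(l*q^(j+M))) q j"
  have tz: "qpow_triangular q j \<noteq> 0" using qpow_triangular_nonzero[OF nz(1)] .
  have F1: "qpoch_nat (l*q) q (2*j) * qpoch_nat (l*q^(2*j)*q) q M = qpoch_nat (l*q) q (j+M)
      * qpoch_nat (l*q^(j+M+1)) q j"
  proof -
    have e1: "qpoch_nat (l*q) q (2*j+M) = qpoch_nat (l*q) q (2*j) * qpoch_nat (l*q^(2*j)*q) q M"
      using qpoch_nat_add[of "l*q" q "2*j" M] by (simp add: mult_ac)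
    have e2: "qpoch_nat (l*q) q ((j+M)+j) = qpoch_nat (l*q) q (j+M) * qpoch_nat (l*q^(j+M+1)) q j"
      using qpoch_nat_add[of "l*q" q "j+M" j] by (simp add: mult_ac)
    have "2*j+M = (j+M)+j" by simp
    then show ?thesis using e1 e2 by metis
  qed
  have F2: "qpoch_nat (l*q/d) q j * qpoch_nat (l*q^(j+1)/d) q M = qpoch_nat (l*q/d) q (j+M)"
           "qpoch_nat (l*q/e) q j * qpoch_nat (l*q^(j+1)/e) q M = qpoch_nat (l*q/e) q (j+M)"
    using qpoch_nat_add[of "l*q/d" q j M] qpoch_nat_add[of "l*q/e" q j M] by (simp_all add: mult_ac)
  have F3: "l*q^(2*j)*q/(d*q^j*(e*q^j)) = l*q/(d*e)"
    using nz by (simp add: field_simps power_add mult_2 mult_2_right)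
  have F4: "qpoch_nat (l*q/(d*e)) q M * G * (-1)^j = qpoch_nat (l*q/(d*e)) q (j+M) * qpow_triangular q j / Qd"
  proof -
    have "qpoch_nat (l*q/(d*e)) q M * G * (-1)^j * Qd = qpoch_nat (l*q/(d*e)) q (j+M) * qpow_triangular q j"
    proof -
      have y: "l/(d*e)*q = l*q/(d*e)" "l/(d*e)*q^(j+M+1) = l*q^(j+M+1)/(d*e)"
        "1/(l/(d*e)*q^(j+M)) = d*e/(l*q^(j+M))"
        using nz by simp_all
      show ?thesis
        using qpoch_nat_reflect[of q "l/(d*e)" M j] nz unfolding y G_def Qd_def by simp
    qed
    then show ?thesis using nq(4) unfolding Qd_def[symmetric] by (simp add: field_simps)
  qed
  have nq2: "qpoch_nat (l*q/d) q j \<noteq> 0" "qpoch_nat (l*q^(j+1)/d) q M \<noteq> 0" "qpoch_nat (l*q/e) q j \<noteq> 0" "qpoch_nat (l*q^(j+1)/e) q M \<noteq> 0"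
    using nq(1,2) F2 by (metis mult_eq_0_iff)+
  have "watson_shift_factor q l d e (j+M) j * (qpoch_nat (l*q^(2*j)*q) q M
      * qpoch_nat (l*q^(2*j)*q/(d*q^j*(e*q^j))) q M
            / (qpoch_nat (l*q^(j+1)/d) q M * qpoch_nat (l*q^(j+1)/e) q M))
     = (qpoch_nat (l*q) q (2*j) * qpoch_nat (l*q^(2*j)*q) q M) * qpoch_nat d q j * qpoch_nat e q j
         * qpoch_nat (1/q^(j+M)) q j
        * (qpoch_nat (l*q/(d*e)) q M * G * (-1)^j)
        / (qpow_triangular q j * (qpoch_nat (l*q/d) q j * qpoch_nat (l*q^(j+1)/d) q M)
            * (qpoch_nat (l*q/e) q j * qpoch_nat (l*q^(j+1)/e) q M) * qpoch_nat (l*q^(j+M+1)) q j)"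
    unfolding watson_shift_factor_def F3 G_def[symmetric] using nq nq2 tz by (simp add: field_simps)
  also have "\<dots> = qpoch_nat (l*q) q (j+M) * qpoch_nat (l*q/(d*e)) q (j+M)
      / (qpoch_nat (l*q/d) q (j+M) * qpoch_nat (l*q/e) q (j+M))
         * (qpoch_nat (1/q^(j+M)) q j * qpoch_nat d q j * qpoch_nat e q j / Qd)"
    unfolding F1 F2 F4 using nq nq2 tz by (simp add: field_simps)
  finally show ?thesis unfolding Qd_def .
qed

lemma watson_inner_sum:
  fixes q l d e :: complex and N j :: nat
  assumes nz: "q \<noteq> 0" "l \<noteq> 0" "d \<noteq> 0" "e \<noteq> 0" "1 - l \<noteq> 0"
  assumes hq: "\<And>i. q^Suc i \<noteq> 1" and hl: "\<And>i. l*q^Suc i \<noteq> 1"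
  assumes nN: "qpoch_nat (l*q/d) q N \<noteq> 0" "qpoch_nat (l*q/e) q N \<noteq> 0" "qpoch_nat (d*e/(l*q^N)) q N \<noteq> 0"
  assumes jN: "j \<le> N"
  shows "(\<Sum>k\<le>N. watson_weight q l d e N k * (qpoch_nat (1/q^k) q j * qpoch_nat (l*q^k) q j))
    = qpoch_nat (l*q) q N * qpoch_nat (l*q/(d*e)) q N / (qpoch_nat (l*q/d) q N * qpoch_nat (l*q/e) q N)
      * (qpoch_nat (1/q^N) q j * qpoch_nat d q j * qpoch_nat e q j / qpoch_nat (d*e/(l*q^N)) q j)"
proof -
  define M where "M = N - j"
  have NM: "N = j + M" using jN by (simp add: M_def)
  have qq: "qpoch_nat q q n \<noteq> 0" for n using qpoch_nat_power_nonzero[OF hq, of 0 n] by simp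
  have F2: "qpoch_nat (l*q/d) q j * qpoch_nat (l*q^(j+1)/d) q M = qpoch_nat (l*q/d) q N"
           "qpoch_nat (l*q/e) q j * qpoch_nat (l*q^(j+1)/e) q M = qpoch_nat (l*q/e) q N"
    using qpoch_nat_add[of "l*q/d" q j M] qpoch_nat_add[of "l*q/e" q j M] NM by (simp_all add: mult_ac)
  have nd: "qpoch_nat (l*q/d) q j \<noteq> 0" "qpoch_nat (l*q^(j+1)/d) q M \<noteq> 0"
    "qpoch_nat (l*q/e) q j \<noteq> 0" "qpoch_nat (l*q^(j+1)/e) q M \<noteq> 0"
    using nN(1,2) unfolding F2[symmetric] by auto
  have A1: "1 - l*q^(2*j) \<noteq> 0"
  proof (cases j)
    case 0 then show ?thesis using nz(5) by simp
  next
    case (Suc i) then show ?thesis using hl[of "Suc (2*i)"] by (simp add: mult_2 power_add mult_ac)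
  qed
  have hA: "l*q^(2*j)*q^Suc i \<noteq> 1" for i using hl[of "2*j+i"] by (simp add: power_add mult_ac)
  have s10: "l*q^(2*j)*q/(d*q^j) = l*q^(j+1)/d" "l*q^(2*j)*q/(e*q^j) = l*q^(j+1)/e"
    using nz by (simp_all add: field_simps power_add mult_2 mult_2_right)
  have "(\<Sum>k\<le>N. watson_weight q l d e N k * (qpoch_nat (1/q^k) q j * qpoch_nat (l*q^k) q j))
      = (\<Sum>m\<le>M. watson_weight q l d e (j+M) (j+m) * (qpoch_nat (1/q^(j+m)) q j * qpoch_nat (l*q^(j+m)) q j))"
    unfolding NM by (rule sum_atMost_shift_vanishing) (use qpoch_nat_inverse_power_eq_0[OF nz(1)] in auto)
  also have "\<dots> = watson_shift_factor q l d e (j+M) j * (\<Sum>m\<le>M. vwp6_term q (l*q^(2*j)) (d*q^j) (e*q^j) M m)"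
    unfolding sum_distrib_left
  proof (rule sum.cong[OF refl])
    fix m assume "m \<in> {..M}"
    then show "watson_weight q l d e (j+M) (j+m) * (qpoch_nat (1/q^(j+m)) q j * qpoch_nat (l*q^(j+m)) q j)
      = watson_shift_factor q l d e (j+M) j * vwp6_term q (l*q^(2*j)) (d*q^j) (e*q^j) M m"
      using nd qpoch_nat_nonzero_le[of m M] qpoch_nat_power_nonzero[OF hq, of m j]
        qpoch_nat_shift_nonzero[OF hl, of "j+M" j] qpoch_nat_shift_nonzero[of "l*q^(2*j)" q M m] hA
      by (intro watson_weight_shift[OF nz(1,3,4,5) A1 qq]) (auto simp: mult_ac)
  qed
  also have "(\<Sum>m\<le>M. vwp6_term q (l*q^(2*j)) (d*q^j) (e*q^j) M m)
      = qpoch_nat (l*q^(2*j)*q) q M * qpoch_nat (l*q^(2*j)*q/(d*q^j*(e*q^j))) q M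
        / (qpoch_nat (l*q^(j+1)/d) q M * qpoch_nat (l*q^(j+1)/e) q M)"
    unfolding s10[symmetric]
    by (rule vwp6_summation) (use nz A1 hA qq nd in \<open>simp_all add: s10\<close>)
  also have "watson_shift_factor q l d e (j+M) j * \<dots>
      = qpoch_nat (l*q) q (j+M) * qpoch_nat (l*q/(d*e)) q (j+M) / (qpoch_nat (l*q/d) q (j+M)
          * qpoch_nat (l*q/e) q (j+M))
         * (qpoch_nat (1/q^(j+M)) q j * qpoch_nat d q j * qpoch_nat e q j / qpoch_nat (d*e/(l*q^(j+M))) q j)"
    using nN NM qpoch_nat_shift_nonzero[OF hl, of "j+M" j] qpoch_nat_nonzero_le[OF jN nN(3)]
    by (intro watson_shift_factor_collapse[OF nz(1-4)]) simp_all
  finally show ?thesis unfolding NM .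
qed

lemma watson_term_split:
  fixes q l b c d e :: complex and N k :: nat
  assumes nz: "q \<noteq> 0" "b \<noteq> 0" "c \<noteq> 0" "d \<noteq> 0" "e \<noteq> 0"
  assumes hq: "\<And>i. q^Suc i \<noteq> 1"
  assumes kN: "k \<le> N"
  assumes nk: "qpoch_nat (l*q/b) q k \<noteq> 0" "qpoch_nat (l*q/c) q k \<noteq> 0"
  shows "(1 - l*q^(2*k))/(1-l) * (qpoch_nat l q k * qpoch_nat b q k * qpoch_nat c q k * qpoch_nat d q k
           * qpoch_nat e q k * qpoch_nat (1/q^N) q k)
      / (qpoch_nat q q k * qpoch_nat (l*q/b) q k * qpoch_nat (l*q/c) q k * qpoch_nat (l*q/d) q k
           * qpoch_nat (l*q/e) q k * qpoch_nat (l*q^(N+1)) q k)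
      * (l^2*q^(N+2)/(b*c*d*e))^k
    = watson_weight q l d e N k * (\<Sum>j\<le>N. saalschutz_term q l b c k j)"
proof -
  have qq: "qpoch_nat q q k \<noteq> 0" using qpoch_nat_power_nonzero[OF hq, of 0 k] by simp
  have "(\<Sum>j\<le>N. saalschutz_term q l b c k j) = (\<Sum>j\<le>k. saalschutz_term q l b c k j)"
    by (rule sum.mono_neutral_right)
       (use kN qpoch_nat_inverse_power_eq_0[OF nz(1)] in \<open>auto simp: saalschutz_term_def\<close>)
  also have "\<dots> = qpoch_nat b q k * qpoch_nat c q k / (qpoch_nat (l*q/b) q k * qpoch_nat (l*q/c) q k)
      * (l*q/(b*c))^k"
    by (rule q_saalschutz[OF nz(1-3) qq nk])
  finally have sum: "(\<Sum>j\<le>N. saalschutz_term q l b c k j) = \<dots>" .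
  have pw: "(l^2*q^(N+2)/(b*c*d*e))^k = (l*q/(b*c))^k * (l*q^(N+1)/(d*e))^k"
    unfolding power_mult_distrib[symmetric] using nz by (simp add: field_simps power2_eq_square)
  show ?thesis
    unfolding sum watson_weight_def pw using nk qq by (simp add: field_simps)
qed

theorem watson_transformation:
  fixes q l b c d e :: complex and N :: nat
  assumes nz: "q \<noteq> 0" "l \<noteq> 0" "b \<noteq> 0" "c \<noteq> 0" "d \<noteq> 0" "e \<noteq> 0" "1 - l \<noteq> 0"
  assumes hq: "\<And>i. q^Suc i \<noteq> 1" and hl: "\<And>i. l*q^Suc i \<noteq> 1"
  assumes nN: "qpoch_nat (l*q/b) q N \<noteq> 0" "qpoch_nat (l*q/c) q N \<noteq> 0" "qpoch_nat (l*q/d) q N \<noteq> 0"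
    "qpoch_nat (l*q/e) q N \<noteq> 0" "qpoch_nat (d*e/(l*q^N)) q N \<noteq> 0"
  shows "(\<Sum>k\<le>N. (1 - l*q^(2*k))/(1-l) * (qpoch_nat l q k * qpoch_nat b q k * qpoch_nat c q k
            * qpoch_nat d q k * qpoch_nat e q k * qpoch_nat (1/q^N) q k)
        / (qpoch_nat q q k * qpoch_nat (l*q/b) q k * qpoch_nat (l*q/c) q k * qpoch_nat (l*q/d) q k
            * qpoch_nat (l*q/e) q k * qpoch_nat (l*q^(N+1)) q k)
        * (l^2*q^(N+2)/(b*c*d*e))^k)
   = qpoch_nat (l*q) q N * qpoch_nat (l*q/(d*e)) q N / (qpoch_nat (l*q/d) q N * qpoch_nat (l*q/e) q N)
     * (\<Sum>j\<le>N. qpoch_nat (1/q^N) q j * qpoch_nat d q j * qpoch_nat e q j * qpoch_nat (l*q/(b*c)) q j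
        / (qpoch_nat q q j * qpoch_nat (l*q/b) q j * qpoch_nat (l*q/c) q j * qpoch_nat (d*e/(l*q^N)) q j)
        * q^j)"
  (is "?lhs = ?C * ?rhs")
proof -
  define s where "s j = qpoch_nat (l*q/(b*c)) q j / (qpoch_nat q q j * qpoch_nat (l*q/b) q j
    * qpoch_nat (l*q/c) q j) * q^j" for j
  have "?lhs = (\<Sum>k\<le>N. watson_weight q l d e N k * (\<Sum>j\<le>N. saalschutz_term q l b c k j))"
    using nN(1,2) qpoch_nat_nonzero_le
    by (intro sum.cong refl watson_term_split[OF nz(1,3-6) hq]) auto
  also have "\<dots> = (\<Sum>j\<le>N. s j * (\<Sum>k\<le>N. watson_weight q l d e N k
                      * (qpoch_nat (1/q^k) q j * qpoch_nat (l*q^k) q j)))"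
    unfolding sum_distrib_left by (subst sum.swap) (simp add: saalschutz_term_def s_def mult_ac)
  also have "\<dots> = ?C * ?rhs"
    unfolding sum_distrib_left[of ?C]
  proof (intro sum.cong refl)
    fix j assume "j \<in> {..N}"
    then have jN: "j \<le> N" by simp
    show "s j * (\<Sum>k\<le>N. watson_weight q l d e N k * (qpoch_nat (1/q^k) q j * qpoch_nat (l*q^k) q j))
      = ?C * (qpoch_nat (1/q^N) q j * qpoch_nat d q j * qpoch_nat e q j * qpoch_nat (l*q/(b*c)) q j
        / (qpoch_nat q q j * qpoch_nat (l*q/b) q j * qpoch_nat (l*q/c) q j * qpoch_nat (d*e/(l*q^N)) q j)
        * q^j)"
      unfolding watson_inner_sum[OF nz(1,2,5,6,7) hq hl nN(3-5) jN] s_def by (simp add: mult_ac)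
  qed
  finally show ?thesis .
qed

section \<open>Terminating bilateral series\<close>

definition bilateral_term :: "complex \<Rightarrow> complex \<Rightarrow> complex \<Rightarrow> complex \<Rightarrow> complex \<Rightarrow> complex \<Rightarrow> int \<Rightarrow> complex" where
  "bilateral_term q a b c d e k =
     (qpoch (q/a) q k * qpoch (q/b) q k * qpoch (q/c) q k * qpoch (q/d) q k * qpoch (q/e) q k)
     / (qpoch a q k * qpoch (b*q) q k * qpoch (c*q) q k * qpoch (d*q) q k * qpoch (e*q) q k)
     * (a*b*c*d*e) powi k"

definition vwp_term :: "complex \<Rightarrow> complex \<Rightarrow> complex \<Rightarrow> complex \<Rightarrow> complex \<Rightarrow> complex \<Rightarrow> nat \<Rightarrow> complex" where
  "vwp_term q a b c d e n = (1 - q^(2*n+1))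
     * (qpoch_nat (q/a) q n * qpoch_nat (q/b) q n * qpoch_nat (q/c) q n * qpoch_nat (q/d) q n
         * qpoch_nat (q/e) q n)
     / (qpoch_nat (a*q) q n * qpoch_nat (b*q) q n * qpoch_nat (c*q) q n * qpoch_nat (d*q) q n
         * qpoch_nat (e*q) q n)
     * (a*b*c*d*e/q)^n"

lemma bilateral_term_neg:
  fixes q a b c d e :: complex
  assumes nz: "q \<noteq> 0" "a \<noteq> 0" "b \<noteq> 0" "c \<noteq> 0" "d \<noteq> 0" "e \<noteq> 0"
    and hx: "qpoch_nat b q (Suc n) \<noteq> 0" "qpoch_nat c q (Suc n) \<noteq> 0" "qpoch_nat d q (Suc n) \<noteq> 0"
      "qpoch_nat e q (Suc n) \<noteq> 0"
  shows "bilateral_term q a b c d e (- int (Suc n))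
    = a/q * (a*b*c*d*e/q)^n * (qpoch_nat (q/a) q (Suc n) / qpoch_nat a q (Suc n))
      * (qpoch_nat (q/b) q n / qpoch_nat (b*q) q n) * (qpoch_nat (q/c) q n / qpoch_nat (c*q) q n)
      * (qpoch_nat (q/d) q n / qpoch_nat (d*q) q n) * (qpoch_nat (q/e) q n / qpoch_nat (e*q) q n)"
proof -
  let ?k = "- int (Suc n)"
  have split: "bilateral_term q a b c d e ?k
    = (qpoch (q/a) q ?k / qpoch a q ?k) * (qpoch (q/b) q ?k / qpoch (b*q) q ?k)
      * (qpoch (q/c) q ?k / qpoch (c*q) q ?k) * (qpoch (q/d) q ?k / qpoch (d*q) q ?k)
      * (qpoch (q/e) q ?k / qpoch (e*q) q ?k) * inverse ((a*b*c*d*e)^Suc n)"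
    unfolding bilateral_term_def power_int_minus power_int_of_nat by (simp add: times_divide_times_eq)
  have pw: "(a^2/q)^Suc n * (b^(2*n+1) * c^(2*n+1) * d^(2*n+1) * e^(2*n+1)) * inverse ((a*b*c*d*e)^Suc n)
      = a/q * (a*b*c*d*e/q)^n"
    using nz by (simp add: power_mult_distrib power_divide power_add power_mult power2_eq_square field_simps)
  show ?thesis
    unfolding split qpoch_neg_ratio_base[OF nz(2,1)] qpoch_neg_ratio_Suc[OF nz(3,1) hx(1)]
      qpoch_neg_ratio_Suc[OF nz(4,1) hx(2)] qpoch_neg_ratio_Suc[OF nz(5,1) hx(3)]
      qpoch_neg_ratio_Suc[OF nz(6,1) hx(4)] pw[symmetric]
    by (simp add: mult_ac)
qed

lemma bilateral_term_pair:
  fixes q a b c d e :: complex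
  assumes nz: "q \<noteq> 0" "a \<noteq> 0" "b \<noteq> 0" "c \<noteq> 0" "d \<noteq> 0" "e \<noteq> 0"
    and ha: "qpoch_nat a q (Suc n) \<noteq> 0"
    and hx: "qpoch_nat b q (Suc n) \<noteq> 0" "qpoch_nat c q (Suc n) \<noteq> 0" "qpoch_nat d q (Suc n) \<noteq> 0"
      "qpoch_nat e q (Suc n) \<noteq> 0"
  shows "bilateral_term q a b c d e (int n) + bilateral_term q a b c d e (- int (Suc n))
    = a/q/(1-a) * vwp_term q a b c d e n"
proof -
  define z where "z = a*b*c*d*e"
  define qn where "qn = q^n"
  define Q where "Q = qpoch_nat (q/b) q n * qpoch_nat (q/c) q n * qpoch_nat (q/d) q n * qpoch_nat (q/e) q n"
  define D where "D = qpoch_nat (b*q) q n * qpoch_nat (c*q) q n * qpoch_nat (d*q) q n * qpoch_nat (e*q) q n"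
  have D: "D \<noteq> 0" using hx unfolding D_def qpoch_nat_Suc_shift by simp
  have qn: "qn \<noteq> 0" using nz(1) by (simp add: qn_def)
  have a1: "qpoch_nat a q (Suc n) = qpoch_nat a q n * (1 - a*qn)"
    and a2: "qpoch_nat a q (Suc n) = (1 - a) * qpoch_nat (a*q) q n"
    unfolding qn_def by (rule qpoch_nat_Suc qpoch_nat_Suc_shift)+
  have na: "qpoch_nat a q n \<noteq> 0" "1 - a*qn \<noteq> 0" "1 - a \<noteq> 0"
    using ha unfolding a1 by simp_all (use ha a2 in auto)
  have a_n: "qpoch_nat a q n = (1-a) * qpoch_nat (a*q) q n / (1 - a*qn)"
    using a1 a2 na by (simp add: field_simps)
  have naq: "qpoch_nat (a*q) q n \<noteq> 0" using ha a2 by auto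
  have qa: "qpoch_nat (q/a) q (Suc n) = qpoch_nat (q/a) q n * (1 - q/a*qn)"
    unfolding qn_def by (rule qpoch_nat_Suc)
  define K where "K = qpoch_nat (q/a) q n * Q * z^n / (qpoch_nat (a*q) q n * D * (q*qn*(1-a)))"
  have pos: "bilateral_term q a b c d e (int n) = K * (q*qn*(1 - a*qn))"
    unfolding bilateral_term_def qpoch_of_nat power_int_of_nat a_n K_def
    unfolding Q_def D_def z_def using nz na naq D qn unfolding D_def
    by (simp add: field_simps)
  have "bilateral_term q a b c d e (- int (Suc n))
      = a/q * (z^n/qn) * (qpoch_nat (q/a) q n * (1 - q/a*qn)) / ((1-a) * qpoch_nat (a*q) q n) * Q / D"
    unfolding bilateral_term_neg[OF nz hx] a2 qa Q_def D_def z_def qn_def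
    by (simp add: power_divide times_divide_times_eq mult_ac)
  also have "\<dots> = K * (a - q*qn)"
    unfolding K_def using nz na naq D qn by (simp add: field_simps)
  finally have neg: "bilateral_term q a b c d e (- int (Suc n)) = K * (a - q*qn)" .
  have vwp_eq: "vwp_term q a b c d e n = (1 - q*qn*qn) * (qpoch_nat (q/a) q n * Q)
      / (qpoch_nat (a*q) q n * D) * (z^n/qn)"
    unfolding vwp_term_def Q_def D_def z_def qn_def
    by (simp add: power_add power_mult power2_eq_square power_divide mult_ac)
  have vwp: "a/q/(1-a) * vwp_term q a b c d e n = K * (a - a*q*qn*qn)"
    unfolding vwp_eq K_def using nz na naq D qn by (simp add: field_simps)
  show ?thesis
    unfolding pos neg vwp by (simp add: algebra_simps)
qed

lemma bilateral_term_vanishes_pos: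
  assumes "q \<noteq> 0" "a = q^Suc N \<or> b = q^Suc N \<or> c = q^Suc N" "N < n"
  shows "bilateral_term q a b c d e (int n) = 0"
  using assms qpoch_nat_div_power_eq_0[OF assms(1) _ assms(3)]
  unfolding bilateral_term_def qpoch_of_nat by auto

text \<open>Here a factor of the denominator is \<open>0\<close>, and the term is \<open>0\<close> because \<open>x / 0 = 0\<close>.\<close>

lemma bilateral_term_vanishes_neg:
  assumes q: "q \<noteq> 0" and sp: "a = q^Suc N \<or> b = q^Suc N \<or> c = q^Suc N" and "Suc N < m"
  shows "bilateral_term q a b c d e (- int m) = 0"
proof -
  have shifted: "qpoch (x*q) q (- int m) = 0" if "x = q^Suc N" for x
  proof -
    have "q/(x*q) = 1/q^Suc N" using q that by simp
    then show ?thesis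
      using qpoch_neg[of "x*q" q m] qpoch_nat_inverse_power_eq_0[OF q \<open>Suc N < m\<close>] q that by simp
  qed
  have "qpoch a q (- int m) = 0" if "a = q^Suc N"
    using qpoch_neg[of a q m] qpoch_nat_div_power_eq_0[OF q that, of m] q that \<open>Suc N < m\<close> by simp
  then have "qpoch a q (- int m) * qpoch (b*q) q (- int m) * qpoch (c*q) q (- int m) = 0"
    using sp shifted by auto
  then show ?thesis unfolding bilateral_term_def by simp
qed

lemma sum_int_interval_pairs:
  fixes f :: "int \<Rightarrow> 'a::comm_monoid_add"
  shows "(\<Sum>k\<in>{- int (Suc N)..int N}. f k) = (\<Sum>n\<le>N. f (int n) + f (- int (Suc n)))"
proof (induction N)
  case 0
  have "{- int (Suc 0)..int 0} = {0, -1}" by auto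
  then show ?case by simp
next
  case (Suc N)
  have "{- int (Suc (Suc N))..int (Suc N)}
      = insert (int (Suc N)) (insert (- int (Suc (Suc N))) {- int (Suc N)..int N})"
    by auto
  then show ?case using Suc.IH by (simp add: add_ac)
qed

lemma bilateral_sum_terminating:
  fixes q a b c d e :: complex
  assumes nz: "q \<noteq> 0" "a \<noteq> 0" "b \<noteq> 0" "c \<noteq> 0" "d \<noteq> 0" "e \<noteq> 0"
    and sp: "a = q^Suc N \<or> b = q^Suc N \<or> c = q^Suc N"
    and hx: "\<And>n. qpoch_nat a q n \<noteq> 0" "\<And>n. qpoch_nat b q n \<noteq> 0" "\<And>n. qpoch_nat c q n \<noteq> 0"
      "\<And>n. qpoch_nat d q n \<noteq> 0" "\<And>n. qpoch_nat e q n \<noteq> 0"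
  shows "(\<Sum>\<^sub>\<infinity>k. bilateral_term q a b c d e k) = a/q/(1-a) * (\<Sum>n\<le>N. vwp_term q a b c d e n)"
proof -
  have "(\<Sum>\<^sub>\<infinity>k. bilateral_term q a b c d e k) = (\<Sum>\<^sub>\<infinity>k\<in>{- int (Suc N)..int N}. bilateral_term q a b c d e k)"
  proof (rule infsum_cong_neutral)
    fix k assume "k \<in> UNIV - {- int (Suc N)..int N}"
    then consider n where "k = int n" "N < n" | m where "k = - int m" "Suc N < m"
      by (cases k rule: int_cases2) auto
    then show "bilateral_term q a b c d e k = 0"
      by cases (use bilateral_term_vanishes_pos[OF nz(1) sp] bilateral_term_vanishes_neg[OF nz(1) sp] in auto)
  qed auto
  also have "\<dots> = (\<Sum>k\<in>{- int (Suc N)..int N}. bilateral_term q a b c d e k)"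
    by (rule infsum_finite) simp
  also have "\<dots> = (\<Sum>n\<le>N. bilateral_term q a b c d e (int n) + bilateral_term q a b c d e (- int (Suc n)))"
    by (rule sum_int_interval_pairs)
  also have "\<dots> = a/q/(1-a) * (\<Sum>n\<le>N. vwp_term q a b c d e n)"
    unfolding sum_distrib_left by (intro sum.cong refl bilateral_term_pair[OF nz hx])
  finally show ?thesis .
qed

section \<open>Infinite q-shifted factorials\<close>

lemma qpoch_nat_convergent:
  assumes "cmod q < 1"
  shows "convergent (\<lambda>n. qpoch_nat x q n)"
proof -
  have "summable (\<lambda>i. norm ((1 - x*q^i) - 1))"
    using summable_mult[OF summable_geometric[of "cmod q"], of "cmod x"] assms
    by (simp add: norm_mult norm_power)
  then have "abs_convergent_prod (\<lambda>i. 1 - x*q^i)" by (rule summable_imp_abs_convergent_prod)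
  then have "convergent (\<lambda>n. \<Prod>i\<le>n. 1 - x*q^i)"
    by (intro convergent_prod_imp_convergent abs_convergent_prod_imp_convergent_prod)
  then have "convergent (\<lambda>n. qpoch_nat x q (Suc n))" by (simp add: qpoch_nat_def lessThan_Suc_atMost)
  then show ?thesis by (simp add: convergent_Suc_iff)
qed

lemma qpoch_inf_split:
  assumes "cmod q < 1"
  shows "qpoch_inf x q = qpoch_nat x q m * qpoch_inf (x*q^m) q"
proof -
  have "(\<lambda>n. qpoch_nat (x*q^m) q n) \<longlonglongrightarrow> qpoch_inf (x*q^m) q"
    using qpoch_nat_convergent[OF assms, of "x*q^m"]
    by (simp add: qpoch_inf_def qpoch_of_nat convergent_LIMSEQ_iff)
  then have "(\<lambda>n. qpoch_nat x q (n+m)) \<longlonglongrightarrow> qpoch_nat x q m * qpoch_inf (x*q^m) q"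
    unfolding add.commute[of _ m] qpoch_nat_add by (intro tendsto_mult tendsto_const)
  then have "(\<lambda>n. qpoch_nat x q n) \<longlonglongrightarrow> qpoch_nat x q m * qpoch_inf (x*q^m) q"
    by (rule LIMSEQ_offset)
  then show ?thesis by (simp add: qpoch_inf_def qpoch_of_nat limI)
qed

lemma qpoch_inf_ratio_terminating:
  assumes q: "cmod q < 1" "q \<noteq> 0" and c: "c = q^Suc N"
    and nz: "qpoch_inf (a*q) q \<noteq> 0" "qpoch_inf (b*q) q \<noteq> 0" "qpoch_inf (c*q) q \<noteq> 0"
      "qpoch_inf (a*b*c/q) q \<noteq> 0"
    and nN: "qpoch_nat (a*q) q N \<noteq> 0" "qpoch_nat (b*q) q N \<noteq> 0"
  shows "qpoch_inf q q * qpoch_inf (a*b) q * qpoch_inf (b*c) q * qpoch_inf (a*c) q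
       / (qpoch_inf (a*q) q * qpoch_inf (b*q) q * qpoch_inf (c*q) q * qpoch_inf (a*b*c/q) q)
     = qpoch_nat q q (Suc N) * qpoch_nat (a*b) q N / (qpoch_nat (a*q) q N * qpoch_nat (b*q) q N)"
proof -
  have i1: "qpoch_inf q q = qpoch_nat q q (Suc N) * qpoch_inf (c*q) q"
    using qpoch_inf_split[OF q(1), of q "Suc N"] c by (simp add: mult_ac)
  have i2: "qpoch_inf (a*q) q = qpoch_nat (a*q) q N * qpoch_inf (a*c) q"
    using qpoch_inf_split[OF q(1), of "a*q" N] c by (simp add: mult_ac)
  have i3: "qpoch_inf (b*q) q = qpoch_nat (b*q) q N * qpoch_inf (b*c) q"
    using qpoch_inf_split[OF q(1), of "b*q" N] c by (simp add: mult_ac)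
  have "a*b*q^N = a*b*c/q" using c q(2) by simp
  then have i4: "qpoch_inf (a*b) q = qpoch_nat (a*b) q N * qpoch_inf (a*b*c/q) q"
    using qpoch_inf_split[OF q(1), of "a*b" N] by simp
  have "qpoch_inf (a*c) q \<noteq> 0" "qpoch_inf (b*c) q \<noteq> 0" using nz(1,2) unfolding i2 i3 by auto
  then show ?thesis
    unfolding i1 i4 unfolding i2 i3 using nz(3,4) nN by (simp add: field_simps)
qed

definition balanced_term :: "complex \<Rightarrow> complex \<Rightarrow> complex \<Rightarrow> complex \<Rightarrow> complex \<Rightarrow> complex \<Rightarrow> nat \<Rightarrow> complex" where
  "balanced_term q a b c d e j =
     (qpoch_nat (q/a) q j * qpoch_nat (q/b) q j * qpoch_nat (q/c) q j * qpoch_nat (d*e) q j)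
     / (qpoch_nat q q j * qpoch_nat (q^2/(a*b*c)) q j * qpoch_nat (d*q) q j * qpoch_nat (e*q) q j) * q^j"

lemma balanced_series_terminating:
  assumes "q \<noteq> 0" "a = q^Suc N \<or> b = q^Suc N \<or> c = q^Suc N"
  shows "(\<Sum>j. balanced_term q a b c d e j) = (\<Sum>j\<le>N. balanced_term q a b c d e j)"
proof (rule suminf_finite)
  fix j assume "j \<notin> {..N}"
  then show "balanced_term q a b c d e j = 0"
    using assms qpoch_nat_div_power_eq_0[OF assms(1), of _ N j] unfolding balanced_term_def by auto
qed simp

text \<open>Watson's transformation with \<open>\<lambda> = q\<close> and parameters \<open>q/d, q/e, q/a, q/b\<close>.\<close>

lemma watson_vwp_sum:
  fixes q a b c d e :: complex and N :: nat
  assumes nz: "q \<noteq> 0" "a \<noteq> 0" "b \<noteq> 0" "d \<noteq> 0" "e \<noteq> 0"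
    and hq: "\<And>i. q^Suc i \<noteq> 1" and c: "c = q^Suc N"
    and nN: "qpoch_nat (a*q) q N \<noteq> 0" "qpoch_nat (b*q) q N \<noteq> 0" "qpoch_nat (d*q) q N \<noteq> 0"
      "qpoch_nat (e*q) q N \<noteq> 0" "qpoch_nat (q^2/(a*b*c)) q N \<noteq> 0"
  shows "(\<Sum>n\<le>N. vwp_term q a b c d e n)
       = qpoch_nat q q (Suc N) * qpoch_nat (a*b) q N / (qpoch_nat (a*q) q N * qpoch_nat (b*q) q N)
         * (\<Sum>j\<le>N. balanced_term q a b c d e j)"
proof -
  have q1: "1 - q \<noteq> 0" using hq[of 0] by auto
  have qq: "qpoch_nat q q n \<noteq> 0" for n using qpoch_nat_power_nonzero[OF hq, of 0 n] by simp
  have hl: "q*q^Suc i \<noteq> 1" for i using hq[of "Suc i"] by simp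
  have r: "q*q/(q/a) = a*q" "q*q/(q/b) = b*q" "q*q/(q/d) = d*q" "q*q/(q/e) = e*q"
    "q*q/(q/d*(q/e)) = d*e" "q*q/(q/a*(q/b)) = a*b" "q/a*(q/b)/(q*q^N) = q^2/(a*b*c)"
    "q^2*q^(N+2)/(q/d*(q/e)*(q/a)*(q/b)) = a*b*c*d*e/q" "q*q^(N+1) = c*q" "1/q^N = q/c"
    using nz c by (simp_all add: field_simps power2_eq_square)
  note W = watson_transformation[of q q "q/d" "q/e" "q/a" "q/b" N, unfolded r]
  have "(\<Sum>n\<le>N. vwp_term q a b c d e n)
      = (1-q) * (\<Sum>k\<le>N. (1 - q*q^(2*k))/(1-q) * (qpoch_nat q q k * qpoch_nat (q/d) q k
          * qpoch_nat (q/e) q k * qpoch_nat (q/a) q k * qpoch_nat (q/b) q k * qpoch_nat (q/c) q k)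
        / (qpoch_nat q q k * qpoch_nat (d*q) q k * qpoch_nat (e*q) q k * qpoch_nat (a*q) q k
          * qpoch_nat (b*q) q k * qpoch_nat (c*q) q k) * (a*b*c*d*e/q)^k)"
    unfolding sum_distrib_left
    by (intro sum.cong refl) (use q1 qq in \<open>simp add: vwp_term_def power_add power_mult mult_ac\<close>)
  also have "\<dots> = (1-q) * qpoch_nat (q*q) q N * qpoch_nat (a*b) q N / (qpoch_nat (a*q) q N
      * qpoch_nat (b*q) q N)
      * (\<Sum>j\<le>N. balanced_term q a b c d e j)"
    using nz q1 hq hl nN by (subst W) (simp_all add: balanced_term_def mult_ac)
  also have "(1-q) * qpoch_nat (q*q) q N = qpoch_nat q q (Suc N)"
    by (simp add: qpoch_nat_Suc_shift)
  finally show ?thesis .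
qed

lemma vwp_sum_terminating_at_c:
  fixes q a b c d e :: complex and N :: nat
  assumes q: "cmod q < 1" "q \<noteq> 0" and hq: "\<And>i. q^Suc i \<noteq> 1" and c: "c = q^Suc N"
    and nz: "a \<noteq> 0" "b \<noteq> 0" "d \<noteq> 0" "e \<noteq> 0"
    and nN: "qpoch_nat (a*q) q N \<noteq> 0" "qpoch_nat (b*q) q N \<noteq> 0" "qpoch_nat (d*q) q N \<noteq> 0"
      "qpoch_nat (e*q) q N \<noteq> 0" "qpoch_nat (q^2/(a*b*c)) q N \<noteq> 0"
    and ninf: "qpoch_inf (a*q) q * qpoch_inf (b*q) q * qpoch_inf (c*q) q * qpoch_inf (a*b*c/q) q \<noteq> 0"
  shows "(\<Sum>n\<le>N. vwp_term q a b c d e n)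
       = qpoch_inf q q * qpoch_inf (a*b) q * qpoch_inf (b*c) q * qpoch_inf (a*c) q
         / (qpoch_inf (a*q) q * qpoch_inf (b*q) q * qpoch_inf (c*q) q * qpoch_inf (a*b*c/q) q)
         * (\<Sum>j\<le>N. balanced_term q a b c d e j)"
proof -
  have ninf': "qpoch_inf (a*q) q \<noteq> 0" "qpoch_inf (b*q) q \<noteq> 0" "qpoch_inf (c*q) q \<noteq> 0"
    "qpoch_inf (a*b*c/q) q \<noteq> 0"
    using ninf by auto
  show ?thesis
    unfolding watson_vwp_sum[OF q(2) nz hq c nN] qpoch_inf_ratio_terminating[OF q c ninf' nN(1,2)]
    by simp
qed

lemma vwp_sum_terminating:
  fixes q a b c d e :: complex and N :: nat
  assumes q: "cmod q < 1" "q \<noteq> 0" and hq: "\<And>i. q^Suc i \<noteq> 1"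
    and nz: "a \<noteq> 0" "b \<noteq> 0" "c \<noteq> 0" "d \<noteq> 0" "e \<noteq> 0"
    and sp: "a = q^Suc N \<or> b = q^Suc N \<or> c = q^Suc N"
    and nN: "\<And>x. x \<in> {a,b,c,d,e} \<Longrightarrow> qpoch_nat (x*q) q N \<noteq> 0" "qpoch_nat (q^2/(a*b*c)) q N \<noteq> 0"
    and ninf: "qpoch_inf (a*q) q * qpoch_inf (b*q) q * qpoch_inf (c*q) q * qpoch_inf (a*b*c/q) q \<noteq> 0"
  shows "(\<Sum>n\<le>N. vwp_term q a b c d e n)
       = qpoch_inf q q * qpoch_inf (a*b) q * qpoch_inf (b*c) q * qpoch_inf (a*c) q
         / (qpoch_inf (a*q) q * qpoch_inf (b*q) q * qpoch_inf (c*q) q * qpoch_inf (a*b*c/q) q)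
         * (\<Sum>j\<le>N. balanced_term q a b c d e j)"
proof -
  define R where "R x y z = qpoch_inf q q * qpoch_inf (x*y) q * qpoch_inf (y*z) q * qpoch_inf (x*z) q
    / (qpoch_inf (x*q) q * qpoch_inf (y*q) q * qpoch_inf (z*q) q * qpoch_inf (x*y*z/q) q)" for x y z
  have at_c: "(\<Sum>n\<le>N. vwp_term q x y z d e n) = R x y z * (\<Sum>j\<le>N. balanced_term q x y z d e j)"
    if "z = q^Suc N" "x \<in> {a,b,c}" "y \<in> {a,b,c}" "qpoch_nat (q^2/(x*y*z)) q N \<noteq> 0"
      "qpoch_inf (x*q) q * qpoch_inf (y*q) q * qpoch_inf (z*q) q * qpoch_inf (x*y*z/q) q \<noteq> 0" for x y z
    unfolding R_def using that nz nN(1) by (intro vwp_sum_terminating_at_c[OF q hq]) auto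
  have vwp_perm: "vwp_term q b c a d e = vwp_term q a b c d e" "vwp_term q a c b d e = vwp_term q a b c d e"
    and balanced_perm: "balanced_term q b c a d e = balanced_term q a b c d e"
      "balanced_term q a c b d e = balanced_term q a b c d e"
    and R_perm: "R b c a = R a b c" "R a c b = R a b c"
    by (simp_all add: fun_eq_iff vwp_term_def balanced_term_def R_def mult_ac)
  from sp consider "a = q^Suc N" | "b = q^Suc N" | "c = q^Suc N" by blast
  then have "(\<Sum>n\<le>N. vwp_term q a b c d e n) = R a b c * (\<Sum>j\<le>N. balanced_term q a b c d e j)"
  proof cases
    case 1
    have "(\<Sum>n\<le>N. vwp_term q b c a d e n) = R b c a * (\<Sum>j\<le>N. balanced_term q b c a d e j)"
      by (rule at_c) (use 1 nN(2) ninf in \<open>auto simp: mult_ac\<close>)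
    then show ?thesis unfolding vwp_perm balanced_perm R_perm .
  next
    case 2
    have "(\<Sum>n\<le>N. vwp_term q a c b d e n) = R a c b * (\<Sum>j\<le>N. balanced_term q a c b d e j)"
      by (rule at_c) (use 2 nN(2) ninf in \<open>auto simp: mult_ac\<close>)
    then show ?thesis unfolding vwp_perm balanced_perm R_perm .
  next
    case 3
    show ?thesis by (rule at_c) (use 3 nN(2) ninf in auto)
  qed
  then show ?thesis unfolding R_def .
qed

lemma power_Suc_neq_one:
  fixes q :: complex
  assumes "0 < cmod q" "cmod q < 1"
  shows "q^Suc i \<noteq> 1"
  using power_Suc_less_one[OF assms, of i] by (metis norm_one norm_power less_irrefl)

theorem mainTheorem7:
  fixes q a b c d e :: complex
  assumes hq: "0 < cmod q" "cmod q < 1"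
    and hnz: "a \<noteq> 0" "b \<noteq> 0" "c \<noteq> 0" "d \<noteq> 0" "e \<noteq> 0"
    and hpow: "\<exists>n::nat. n \<ge> 1 \<and> (a = q ^ n \<or> b = q ^ n \<or> c = q ^ n)"
    and hden_pos: "\<And>k::int. k \<ge> 0 \<Longrightarrow>
        qpoch a q k * qpoch (b*q) q k * qpoch (c*q) q k * qpoch (d*q) q k * qpoch (e*q) q k \<noteq> 0"
    and hnum_neg: "\<And>k::int. k < 0 \<Longrightarrow>
        qpoch (q/a) q k * qpoch (q/b) q k * qpoch (q/c) q k * qpoch (q/d) q k * qpoch (q/e) q k \<noteq> 0"
    and hden_rhs: "\<And>k::int. k \<ge> 0 \<Longrightarrow>
        qpoch q q k * qpoch (q^2/(a*b*c)) q k * qpoch (d*q) q k * qpoch (e*q) q k \<noteq> 0"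
    and hden_inf: "qpoch_inf a q * qpoch_inf (b*q) q * qpoch_inf (c*q) q * qpoch_inf (a*b*c/q) q \<noteq> 0"
  shows "(\<Sum>\<^sub>\<infinity>k::int.
            (qpoch (q/a) q k * qpoch (q/b) q k * qpoch (q/c) q k * qpoch (q/d) q k * qpoch (q/e) q k)
            / (qpoch a q k * qpoch (b*q) q k * qpoch (c*q) q k * qpoch (d*q) q k * qpoch (e*q) q k)
            * (a*b*c*d*e) powi k)
       = a * (qpoch_inf q q * qpoch_inf (a*b) q * qpoch_inf (b*c) q * qpoch_inf (a*c) q)
         / (q * (qpoch_inf a q * qpoch_inf (b*q) q * qpoch_inf (c*q) q * qpoch_inf (a*b*c/q) q))
         * (\<Sum>k::nat.
              (qpoch (q/a) q (int k) * qpoch (q/b) q (int k) * qpoch (q/c) q (int k) * qpoch (d*e) q (int k))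
              / (qpoch q q (int k) * qpoch (q^2/(a*b*c)) q (int k) * qpoch (d*q) q (int k) * qpoch (e*q) q (int k))
              * q ^ k)"
proof -
  obtain N where sp: "a = q^Suc N \<or> b = q^Suc N \<or> c = q^Suc N"
  proof -
    from hpow obtain p where "p \<ge> 1" "a = q^p \<or> b = q^p \<or> c = q^p" by blast
    then show thesis by (intro that[of "p - 1"]) simp
  qed
  have q0: "q \<noteq> 0" using hq(1) by auto
  txt \<open>Via the reflection formula, \<open>hnum_neg\<close> gives \<open>(x)\<^sub>m \<noteq> 0\<close> for all \<open>m\<close>.\<close>
  have nz: "qpoch_nat x q m \<noteq> 0" if "x \<in> {a,b,c,d,e}" for x m
    using that hnz hnum_neg by (intro qpoch_nat_nonzero_of_qpoch_neg[OF q0]) auto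
  have a_inf: "qpoch_inf a q = (1-a) * qpoch_inf (a*q) q"
    using qpoch_inf_split[OF hq(2), of a 1] by (simp add: qpoch_nat_def)
  have "(\<Sum>\<^sub>\<infinity>k. bilateral_term q a b c d e k) = a/q/(1-a) * (\<Sum>n\<le>N. vwp_term q a b c d e n)"
    using bilateral_sum_terminating[OF q0 hnz sp] nz by simp
  also have "\<dots> = a/q/(1-a) * (qpoch_inf q q * qpoch_inf (a*b) q * qpoch_inf (b*c) q * qpoch_inf (a*c) q
        / (qpoch_inf (a*q) q * qpoch_inf (b*q) q * qpoch_inf (c*q) q * qpoch_inf (a*b*c/q) q))
      * (\<Sum>j. balanced_term q a b c d e j)"
    unfolding balanced_series_terminating[OF q0 sp]
    using vwp_sum_terminating[OF hq(2) q0 power_Suc_neq_one[OF hq] hnz sp] nz[of _ "Suc N"]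
      hden_rhs[of "int N"] hden_inf
    by (simp add: a_inf qpoch_of_nat qpoch_nat_Suc_shift)
  finally show ?thesis
    unfolding bilateral_term_def balanced_term_def qpoch_of_nat a_inf by simp
qed

end
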